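(* Let $\mathcal L$ be a differential Seely category with comonad $(!,\mathbf d,\mathbf p)$ and let $\mathcal L_!$ be its co-Kleisli category. Then the canonical linear-non-linear adjunction between $\mathcal L_!$ and $\mathcal L$ (with $\mathcal F:\mathcal L_!\to\mathcal L$, $A\mapsto !A$, $f\mapsto\mathbf p_A;!f$ for $f:!A\to B$, and $\mathcal U:\mathcal L\to\mathcal L_!$, $A\mapsto A$, $u\mapsto\mathbf d_A;u$) is a generalised differential Seely category, i.e. it admits a functor $\mathcal T:\mathcal L_!\to LS(\mathcal L_!)$ satisfying axioms (t.1), (t.2), (t.3).
   Context: Composition is diagrammatic ($f;g$ = $f$ then $g$); monoidal categories are strict. Differential Seely category: an additive symmetric monoidal category $(\mathcal L,\otimes,1)$ (enriched over commutative monoids with $\otimes$ bilinear and preserving $0$) with finite products, which are biproducts $\oplus$ (projections $\pi_i$, injections $\iota_i$), and a comonad $(!,\mathbf d,\mathbf p)$ with Seely isomorphisms $!(A\oplus B)\cong!A\otimes!B$, $!0\cong1$ (so the co-Kleisli category $\mathcal L_!$ is cartesian, with products $\oplus$, and the co-Kleisli adjunction is a symmetric monoidal adjunction; each $!A$ is a commutative comonoid with contraction $\mathbf c_A$ and weakening $\mathbf w_A$), together with a natural $\partial_A:!A\otimes A\to!A$ satisfying: $\partial_A;\mathbf w_A=0$; $\partial_A;\mathbf c_A=(\mathbf c_A\otimes\mathrm{id}_A);[(\mathrm{id}_{!A}\otimes\partial_A)+(\mathrm{id}_{!A}\otimes\sigma_{!A,A};\partial_A\otimes\mathrm{id}_{!A})]$;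 $\partial_A;\mathbf d_A=\mathbf w_A\otimes\mathrm{id}_A$; $\partial_A;\mathbf p_A=(\mathbf c_A\otimes\mathrm{id}_A);(\mathbf p_A\otimes\partial_A);\partial_{!A}$; $(\mathrm{id}_{!A}\otimes\sigma_{A,A});(\partial_A\otimes\mathrm{id}_A);\partial_A=(\partial_A\otimes\mathrm{id}_A);\partial_A$. General notions, for an LNL adjunction $\mathcal F\dashv\mathcal U$, $\mathcal F:\mathscr C\to\mathcal L$, between a cartesian $(\mathscr C,\times,I)$ and symmetric monoidal $(\mathcal L,\otimes,1)$, with $\mathcal U$ lax monoidal via $n_{A,B}:\mathcal U(A)\times\mathcal U(B)\to\mathcal U(A\otimes B)$, $\mathcal F$ strong monoidal via $m_{X,Y}:\mathcal F(X)\otimes\mathcal F(Y)\to\mathcal F(X\times Y)$, $m_1:1\to\mathcal F(I)$, unit $\eta$: $\mathbf c_X:=\mathcal F(\Delta_X);m_{X,X}^{-1}$, $\mathbf w_X:=\mathcal F(t_X);m_1^{-1}$ ($t_X$ terminal). $LS(\mathscr C)$ has objects $(X,A)$ ($X\in\mathscr C$, $A\in\mathcal L$), morphisms $(f,u):(X,A)\to(Y,B)$ with $f:X\to Y$, $u:\mathcal F(X)\otimes A\to B$, composition $(f,u);(g,v)=(f;g,(\mathbf c_X\otimes\mathrm{id}_A);(\mathcal F(f)\otimes u);v)$, identity $(\mathrm{id}_X,\mathbf w_X\otimes\mathrm{id}_A)$, projection $\mathbf{ls}(f,u)=f$; when $\mathcal L$ has biproducts, $LS(\mathscr C)$ has products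 $(X,A)\times(Y,B)=(X\times Y,A\oplus B)$ with projections $(\pi_i,\mathbf w_{X\times Y}\otimes\pi_i)$. Axioms for $\mathcal T:\mathscr C\to LS(\mathscr C)$: (t.1) $\mathbf{ls}\circ\mathcal T=\mathrm{id}$ (so $\mathcal T(X)=(X,\lambda(X))$) and $\varphi_{X,Y}:=\langle\mathcal T(\pi_1),\mathcal T(\pi_2)\rangle:\mathcal T(X\times Y)\to(X\times Y,\lambda(X)\oplus\lambda(Y))$ is an isomorphism; (t.2) $\mathcal T(\mathcal U(A))=(\mathcal U(A),A)$; (t.3) with $i^{X,Y}_2:=(\mathrm{id}_{X\times Y},\mathbf w_{X\times Y}\otimes\iota_2);\varphi_{X,Y}^{-1}$, $⦃(f,u)⦄:=\langle\pi_1;f,(\eta_X\times\mathrm{id}_{\mathcal U(A)});n_{\mathcal F(X),A};\mathcal U(u)\rangle:X\times\mathcal U(A)\to Y\times\mathcal U(B)$, $W(f,u):=(⦃(f,u)⦄,(\mathcal F(\pi_1)\otimes\mathrm{id}_A);u):(X\times\mathcal U(A),A)\to(Y\times\mathcal U(B),B)$: $W(f,u);i^{Y,\mathcal U(B)}_2=i^{X,\mathcal U(A)}_2;\mathcal T(⦃(f,u)⦄)$ for all $(f,u):(X,A)\to(Y,B)$. A GDSC is such an LNL with $\mathcal L$ additive with finite products and such a $\mathcal T$. *)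

theory Defs
  imports Main
begin

(* Composition is diagrammatic: L_cmp C f g = f ; g  (first f, then g). *)

record ('o, 'a) dsc_data =
  L_ar   :: "'a set"
  L_dom  :: "'a \<Rightarrow> 'o"
  L_cod  :: "'a \<Rightarrow> 'o"
  L_id   :: "'o \<Rightarrow> 'a"
  L_cmp  :: "'a \<Rightarrow> 'a \<Rightarrow> 'a"
  L_zero :: "'o \<Rightarrow> 'o \<Rightarrow> 'a"
  L_plus :: "'a \<Rightarrow> 'a \<Rightarrow> 'a"
  L_ten  :: "'o \<Rightarrow> 'o \<Rightarrow> 'o"
  L_tenm :: "'a \<Rightarrow> 'a \<Rightarrow> 'a"
  L_one  :: "'o"
  L_sym  :: "'o \<Rightarrow> 'o \<Rightarrow> 'a"
  L_bp   :: "'o \<Rightarrow> 'o \<Rightarrow> 'o"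
  L_pr1  :: "'o \<Rightarrow> 'o \<Rightarrow> 'a"
  L_pr2  :: "'o \<Rightarrow> 'o \<Rightarrow> 'a"
  L_in1  :: "'o \<Rightarrow> 'o \<Rightarrow> 'a"
  L_in2  :: "'o \<Rightarrow> 'o \<Rightarrow> 'a"
  L_zo   :: "'o"
  L_bang :: "'o \<Rightarrow> 'o"
  L_bangm :: "'a \<Rightarrow> 'a"
  L_der  :: "'o \<Rightarrow> 'a"
  L_prm  :: "'o \<Rightarrow> 'a"
  L_sly  :: "'o \<Rightarrow> 'o \<Rightarrow> 'a"
  L_sly0 :: "'a"
  L_dif  :: "'o \<Rightarrow> 'a"

definition hom :: "('o,'a) dsc_data \<Rightarrow> 'o \<Rightarrow> 'o \<Rightarrow> 'a set" where
  "hom C A B = {f \<in> L_ar C. L_dom C f = A \<and> L_cod C f = B}"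

definition is_iso :: "('o,'a) dsc_data \<Rightarrow> 'o \<Rightarrow> 'o \<Rightarrow> 'a \<Rightarrow> bool" where
  "is_iso C A B f \<longleftrightarrow> f \<in> hom C A B \<and>
     (\<exists>g \<in> hom C B A. L_cmp C f g = L_id C A \<and> L_cmp C g f = L_id C B)"

definition inv_of :: "('o,'a) dsc_data \<Rightarrow> 'o \<Rightarrow> 'o \<Rightarrow> 'a \<Rightarrow> 'a" where
  "inv_of C A B f = (THE g. g \<in> hom C B A \<and> L_cmp C f g = L_id C A \<and> L_cmp C g f = L_id C B)"

section \<open>The co-Kleisli category L_! (arrows X \<rightarrow> Y are L-arrows !X \<rightarrow> Y)\<close>

definition kid :: "('o,'a) dsc_data \<Rightarrow> 'o \<Rightarrow> 'a" where
  "kid C X = L_der C X"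

definition kcomp :: "('o,'a) dsc_data \<Rightarrow> 'o \<Rightarrow> 'a \<Rightarrow> 'a \<Rightarrow> 'a" where
  "kcomp C X f g = L_cmp C (L_cmp C (L_prm C X) (L_bangm C f)) g"

definition Fm :: "('o,'a) dsc_data \<Rightarrow> 'o \<Rightarrow> 'a \<Rightarrow> 'a" where
  "Fm C X f = L_cmp C (L_prm C X) (L_bangm C f)"

definition Um :: "('o,'a) dsc_data \<Rightarrow> 'o \<Rightarrow> 'a \<Rightarrow> 'a" where
  "Um C A u = L_cmp C (L_der C A) u"

definition kpi1 :: "('o,'a) dsc_data \<Rightarrow> 'o \<Rightarrow> 'o \<Rightarrow> 'a" where
  "kpi1 C X Y = L_cmp C (L_der C (L_bp C X Y)) (L_pr1 C X Y)"

definition kpi2 :: "('o,'a) dsc_data \<Rightarrow> 'o \<Rightarrow> 'o \<Rightarrow> 'a" where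
  "kpi2 C X Y = L_cmp C (L_der C (L_bp C X Y)) (L_pr2 C X Y)"

definition kpair :: "('o,'a) dsc_data \<Rightarrow> 'o \<Rightarrow> 'o \<Rightarrow> 'a \<Rightarrow> 'a \<Rightarrow> 'a" where
  "kpair C Y W f g = L_plus C (L_cmp C f (L_in1 C Y W)) (L_cmp C g (L_in2 C Y W))"

definition kprod :: "('o,'a) dsc_data \<Rightarrow> 'o \<Rightarrow> 'o \<Rightarrow> 'o \<Rightarrow> 'o \<Rightarrow> 'a \<Rightarrow> 'a \<Rightarrow> 'a" where
  "kprod C X Y X' Y' f g =
     kpair C X' Y' (kcomp C (L_bp C X Y) (kpi1 C X Y) f) (kcomp C (L_bp C X Y) (kpi2 C X Y) g)"

definition kterm :: "('o,'a) dsc_data \<Rightarrow> 'o \<Rightarrow> 'a" where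
  "kterm C X = L_zero C (L_bang C X) (L_zo C)"

definition kdiag :: "('o,'a) dsc_data \<Rightarrow> 'o \<Rightarrow> 'a" where
  "kdiag C X = kpair C X X (kid C X) (kid C X)"

definition kassoc :: "('o,'a) dsc_data \<Rightarrow> 'o \<Rightarrow> 'o \<Rightarrow> 'o \<Rightarrow> 'a" where
  "kassoc C X Y Z =
     (let P = L_bp C (L_bp C X Y) Z in
      kpair C X (L_bp C Y Z)
        (kcomp C P (kpi1 C (L_bp C X Y) Z) (kpi1 C X Y))
        (kpair C Y Z (kcomp C P (kpi1 C (L_bp C X Y) Z) (kpi2 C X Y)) (kpi2 C (L_bp C X Y) Z)))"

definition kswap :: "('o,'a) dsc_data \<Rightarrow> 'o \<Rightarrow> 'o \<Rightarrow> 'a" where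
  "kswap C X Y = kpair C Y X (kpi2 C X Y) (kpi1 C X Y)"

definition contr :: "('o,'a) dsc_data \<Rightarrow> 'o \<Rightarrow> 'a" where
  "contr C X = L_cmp C (Fm C X (kdiag C X))
      (inv_of C (L_ten C (L_bang C X) (L_bang C X)) (L_bang C (L_bp C X X)) (L_sly C X X))"

definition weak :: "('o,'a) dsc_data \<Rightarrow> 'o \<Rightarrow> 'a" where
  "weak C X = L_cmp C (Fm C X (kterm C X)) (inv_of C (L_one C) (L_bang C (L_zo C)) (L_sly0 C))"

definition category_ax :: "('o,'a) dsc_data \<Rightarrow> bool" where
  "category_ax C \<longleftrightarrow>
    (\<forall>A. L_id C A \<in> hom C A A) \<and>
    (\<forall>A B D f g. f \<in> hom C A B \<longrightarrow> g \<in> hom C B D \<longrightarrow> L_cmp C f g \<in> hom C A D) \<and>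
    (\<forall>A B f. f \<in> hom C A B \<longrightarrow> L_cmp C (L_id C A) f = f \<and> L_cmp C f (L_id C B) = f) \<and>
    (\<forall>A B D E f g h. f \<in> hom C A B \<longrightarrow> g \<in> hom C B D \<longrightarrow> h \<in> hom C D E \<longrightarrow>
        L_cmp C (L_cmp C f g) h = L_cmp C f (L_cmp C g h))"

definition additive_ax :: "('o,'a) dsc_data \<Rightarrow> bool" where
  "additive_ax C \<longleftrightarrow>
    (\<forall>A B. L_zero C A B \<in> hom C A B) \<and>
    (\<forall>A B f g. f \<in> hom C A B \<longrightarrow> g \<in> hom C A B \<longrightarrow> L_plus C f g \<in> hom C A B) \<and>
    (\<forall>A B f g h. f \<in> hom C A B \<longrightarrow> g \<in> hom C A B \<longrightarrow> h \<in> hom C A B \<longrightarrow>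
        L_plus C (L_plus C f g) h = L_plus C f (L_plus C g h)) \<and>
    (\<forall>A B f g. f \<in> hom C A B \<longrightarrow> g \<in> hom C A B \<longrightarrow> L_plus C f g = L_plus C g f) \<and>
    (\<forall>A B f. f \<in> hom C A B \<longrightarrow> L_plus C f (L_zero C A B) = f) \<and>
    (\<forall>A B D f g h. f \<in> hom C A B \<longrightarrow> g \<in> hom C A B \<longrightarrow> h \<in> hom C B D \<longrightarrow>
        L_cmp C (L_plus C f g) h = L_plus C (L_cmp C f h) (L_cmp C g h)) \<and>
    (\<forall>A B D f g h. h \<in> hom C A B \<longrightarrow> f \<in> hom C B D \<longrightarrow> g \<in> hom C B D \<longrightarrow>
        L_cmp C h (L_plus C f g) = L_plus C (L_cmp C h f) (L_cmp C h g)) \<and>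
    (\<forall>A B D h. h \<in> hom C B D \<longrightarrow> L_cmp C (L_zero C A B) h = L_zero C A D) \<and>
    (\<forall>A B D h. h \<in> hom C A B \<longrightarrow> L_cmp C h (L_zero C B D) = L_zero C A D)"

text \<open>Strict symmetric monoidal structure, with \<otimes> bilinear and preserving 0.\<close>
definition monoidal_ax :: "('o,'a) dsc_data \<Rightarrow> bool" where
  "monoidal_ax C \<longleftrightarrow>
    (\<forall>A B A' B' f g. f \<in> hom C A B \<longrightarrow> g \<in> hom C A' B' \<longrightarrow>
        L_tenm C f g \<in> hom C (L_ten C A A') (L_ten C B B')) \<and>
    (\<forall>A B. L_tenm C (L_id C A) (L_id C B) = L_id C (L_ten C A B)) \<and>
    (\<forall>A B D A' B' D' f g f' g'. f \<in> hom C A B \<longrightarrow> g \<in> hom C B D \<longrightarrow>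
        f' \<in> hom C A' B' \<longrightarrow> g' \<in> hom C B' D' \<longrightarrow>
        L_tenm C (L_cmp C f g) (L_cmp C f' g') = L_cmp C (L_tenm C f f') (L_tenm C g g')) \<and>
    (\<forall>A B D. L_ten C (L_ten C A B) D = L_ten C A (L_ten C B D)) \<and>
    (\<forall>A. L_ten C (L_one C) A = A \<and> L_ten C A (L_one C) = A) \<and>
    (\<forall>A B A' B' A'' B'' f g h. f \<in> hom C A B \<longrightarrow> g \<in> hom C A' B' \<longrightarrow> h \<in> hom C A'' B'' \<longrightarrow>
        L_tenm C (L_tenm C f g) h = L_tenm C f (L_tenm C g h)) \<and>
    (\<forall>A B f. f \<in> hom C A B \<longrightarrow>
        L_tenm C (L_id C (L_one C)) f = f \<and> L_tenm C f (L_id C (L_one C)) = f) \<and>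
    (\<forall>A B. L_sym C A B \<in> hom C (L_ten C A B) (L_ten C B A)) \<and>
    (\<forall>A B A' B' f g. f \<in> hom C A B \<longrightarrow> g \<in> hom C A' B' \<longrightarrow>
        L_cmp C (L_tenm C f g) (L_sym C B B') = L_cmp C (L_sym C A A') (L_tenm C g f)) \<and>
    (\<forall>A B. L_cmp C (L_sym C A B) (L_sym C B A) = L_id C (L_ten C A B)) \<and>
    (\<forall>A B D. L_sym C A (L_ten C B D) =
        L_cmp C (L_tenm C (L_sym C A B) (L_id C D)) (L_tenm C (L_id C B) (L_sym C A D))) \<and>
    (\<forall>A B A' B' f g h. f \<in> hom C A B \<longrightarrow> g \<in> hom C A B \<longrightarrow> h \<in> hom C A' B' \<longrightarrow>
        L_tenm C (L_plus C f g) h = L_plus C (L_tenm C f h) (L_tenm C g h) \<and>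
        L_tenm C h (L_plus C f g) = L_plus C (L_tenm C h f) (L_tenm C h g)) \<and>
    (\<forall>A B A' B' h. h \<in> hom C A' B' \<longrightarrow>
        L_tenm C (L_zero C A B) h = L_zero C (L_ten C A A') (L_ten C B B') \<and>
        L_tenm C h (L_zero C A B) = L_zero C (L_ten C A' A) (L_ten C B' B))"

definition biproduct_ax :: "('o,'a) dsc_data \<Rightarrow> bool" where
  "biproduct_ax C \<longleftrightarrow>
    (\<forall>A B. L_pr1 C A B \<in> hom C (L_bp C A B) A \<and> L_pr2 C A B \<in> hom C (L_bp C A B) B \<and>
           L_in1 C A B \<in> hom C A (L_bp C A B) \<and> L_in2 C A B \<in> hom C B (L_bp C A B)) \<and>
    (\<forall>A B. L_cmp C (L_in1 C A B) (L_pr1 C A B) = L_id C A \<and>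
           L_cmp C (L_in1 C A B) (L_pr2 C A B) = L_zero C A B \<and>
           L_cmp C (L_in2 C A B) (L_pr1 C A B) = L_zero C B A \<and>
           L_cmp C (L_in2 C A B) (L_pr2 C A B) = L_id C B \<and>
           L_plus C (L_cmp C (L_pr1 C A B) (L_in1 C A B)) (L_cmp C (L_pr2 C A B) (L_in2 C A B))
             = L_id C (L_bp C A B)) \<and>
    L_id C (L_zo C) = L_zero C (L_zo C) (L_zo C)"

definition comonad_ax :: "('o,'a) dsc_data \<Rightarrow> bool" where
  "comonad_ax C \<longleftrightarrow>
    (\<forall>A B f. f \<in> hom C A B \<longrightarrow> L_bangm C f \<in> hom C (L_bang C A) (L_bang C B)) \<and>
    (\<forall>A. L_bangm C (L_id C A) = L_id C (L_bang C A)) \<and>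
    (\<forall>A B D f g. f \<in> hom C A B \<longrightarrow> g \<in> hom C B D \<longrightarrow>
        L_bangm C (L_cmp C f g) = L_cmp C (L_bangm C f) (L_bangm C g)) \<and>
    (\<forall>A. L_der C A \<in> hom C (L_bang C A) A \<and>
         L_prm C A \<in> hom C (L_bang C A) (L_bang C (L_bang C A))) \<and>
    (\<forall>A B f. f \<in> hom C A B \<longrightarrow>
        L_cmp C (L_bangm C f) (L_der C B) = L_cmp C (L_der C A) f \<and>
        L_cmp C (L_prm C A) (L_bangm C (L_bangm C f)) = L_cmp C (L_bangm C f) (L_prm C B)) \<and>
    (\<forall>A. L_cmp C (L_prm C A) (L_der C (L_bang C A)) = L_id C (L_bang C A) \<and>
         L_cmp C (L_prm C A) (L_bangm C (L_der C A)) = L_id C (L_bang C A) \<and>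
         L_cmp C (L_prm C A) (L_prm C (L_bang C A)) = L_cmp C (L_prm C A) (L_bangm C (L_prm C A)))"

text \<open>Seely isomorphisms, making F : (L_!, \<oplus>, 0) \<rightarrow> (L, \<otimes>, 1) strong symmetric monoidal
  (equivalently, by doctrinal adjunction, the co-Kleisli adjunction symmetric monoidal).\<close>
definition seely_ax :: "('o,'a) dsc_data \<Rightarrow> bool" where
  "seely_ax C \<longleftrightarrow>
    (\<forall>X Y. is_iso C (L_ten C (L_bang C X) (L_bang C Y)) (L_bang C (L_bp C X Y)) (L_sly C X Y)) \<and>
    is_iso C (L_one C) (L_bang C (L_zo C)) (L_sly0 C) \<and>
    (\<forall>X Y X' Y' f g. f \<in> hom C (L_bang C X) X' \<longrightarrow> g \<in> hom C (L_bang C Y) Y' \<longrightarrow>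
        L_cmp C (L_tenm C (Fm C X f) (Fm C Y g)) (L_sly C X' Y') =
        L_cmp C (L_sly C X Y) (Fm C (L_bp C X Y) (kprod C X Y X' Y' f g))) \<and>
    (\<forall>X Y Z.
        L_cmp C (L_cmp C (L_tenm C (L_sly C X Y) (L_id C (L_bang C Z))) (L_sly C (L_bp C X Y) Z))
          (Fm C (L_bp C (L_bp C X Y) Z) (kassoc C X Y Z)) =
        L_cmp C (L_tenm C (L_id C (L_bang C X)) (L_sly C Y Z)) (L_sly C X (L_bp C Y Z))) \<and>
    (\<forall>X. L_cmp C (L_cmp C (L_tenm C (L_sly0 C) (L_id C (L_bang C X))) (L_sly C (L_zo C) X))
          (Fm C (L_bp C (L_zo C) X) (kpi2 C (L_zo C) X)) = L_id C (L_bang C X)) \<and>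
    (\<forall>X. L_cmp C (L_cmp C (L_tenm C (L_id C (L_bang C X)) (L_sly0 C)) (L_sly C X (L_zo C)))
          (Fm C (L_bp C X (L_zo C)) (kpi1 C X (L_zo C))) = L_id C (L_bang C X)) \<and>
    (\<forall>X Y. L_cmp C (L_sym C (L_bang C X) (L_bang C Y)) (L_sly C Y X) =
           L_cmp C (L_sly C X Y) (Fm C (L_bp C X Y) (kswap C X Y)))"

definition differential_ax :: "('o,'a) dsc_data \<Rightarrow> bool" where
  "differential_ax C \<longleftrightarrow>
    (\<forall>A. L_dif C A \<in> hom C (L_ten C (L_bang C A) A) (L_bang C A)) \<and>
    (\<forall>A B f. f \<in> hom C A B \<longrightarrow>
        L_cmp C (L_dif C A) (L_bangm C f) = L_cmp C (L_tenm C (L_bangm C f) f) (L_dif C B)) \<and>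
    (\<forall>A. L_cmp C (L_dif C A) (weak C A) = L_zero C (L_ten C (L_bang C A) A) (L_one C)) \<and>
    (\<forall>A. L_cmp C (L_dif C A) (contr C A) =
        L_cmp C (L_tenm C (contr C A) (L_id C A))
          (L_plus C (L_tenm C (L_id C (L_bang C A)) (L_dif C A))
             (L_cmp C (L_tenm C (L_id C (L_bang C A)) (L_sym C (L_bang C A) A))
                      (L_tenm C (L_dif C A) (L_id C (L_bang C A)))))) \<and>
    (\<forall>A. L_cmp C (L_dif C A) (L_der C A) = L_tenm C (weak C A) (L_id C A)) \<and>
    (\<forall>A. L_cmp C (L_dif C A) (L_prm C A) =
        L_cmp C (L_cmp C (L_tenm C (contr C A) (L_id C A)) (L_tenm C (L_prm C A) (L_dif C A)))
          (L_dif C (L_bang C A))) \<and>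
    (\<forall>A. L_cmp C (L_cmp C (L_tenm C (L_id C (L_bang C A)) (L_sym C A A)) (L_tenm C (L_dif C A) (L_id C A)))
          (L_dif C A) =
        L_cmp C (L_tenm C (L_dif C A) (L_id C A)) (L_dif C A))"

definition differential_seely_category :: "('o,'a) dsc_data \<Rightarrow> bool" where
  "differential_seely_category C \<longleftrightarrow> category_ax C \<and> additive_ax C \<and> monoidal_ax C \<and>
     biproduct_ax C \<and> comonad_ax C \<and> seely_ax C \<and> differential_ax C"

text \<open>Objects (X,A); arrows (f,u):(X,A)\<rightarrow>(Y,B) with f : X \<rightarrow> Y in L_! (i.e. !X \<rightarrow> Y in L)
  and u : F(X)\<otimes>A = !X\<otimes>A \<rightarrow> B in L.\<close>
definition LShom :: "('o,'a) dsc_data \<Rightarrow> 'o \<times> 'o \<Rightarrow> 'o \<times> 'o \<Rightarrow> ('a \<times> 'a) set" where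
  "LShom C XA YB = {(f,u). f \<in> hom C (L_bang C (fst XA)) (fst YB) \<and>
                           u \<in> hom C (L_ten C (L_bang C (fst XA)) (snd XA)) (snd YB)}"

definition lscomp :: "('o,'a) dsc_data \<Rightarrow> 'o \<times> 'o \<Rightarrow> 'a \<times> 'a \<Rightarrow> 'a \<times> 'a \<Rightarrow> 'a \<times> 'a" where
  "lscomp C XA fu gv =
     (kcomp C (fst XA) (fst fu) (fst gv),
      L_cmp C (L_cmp C (L_tenm C (contr C (fst XA)) (L_id C (snd XA)))
                       (L_tenm C (Fm C (fst XA) (fst fu)) (snd fu))) (snd gv))"

definition lsid :: "('o,'a) dsc_data \<Rightarrow> 'o \<times> 'o \<Rightarrow> 'a \<times> 'a" where
  "lsid C XA = (kid C (fst XA), L_tenm C (weak C (fst XA)) (L_id C (snd XA)))"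

definition lsproj1 :: "('o,'a) dsc_data \<Rightarrow> 'o \<times> 'o \<Rightarrow> 'o \<times> 'o \<Rightarrow> 'a \<times> 'a" where
  "lsproj1 C XA YB = (kpi1 C (fst XA) (fst YB),
     L_tenm C (weak C (L_bp C (fst XA) (fst YB))) (L_pr1 C (snd XA) (snd YB)))"

definition lsproj2 :: "('o,'a) dsc_data \<Rightarrow> 'o \<times> 'o \<Rightarrow> 'o \<times> 'o \<Rightarrow> 'a \<times> 'a" where
  "lsproj2 C XA YB = (kpi2 C (fst XA) (fst YB),
     L_tenm C (weak C (L_bp C (fst XA) (fst YB))) (L_pr2 C (snd XA) (snd YB)))"

definition lsprodob :: "('o,'a) dsc_data \<Rightarrow> 'o \<times> 'o \<Rightarrow> 'o \<times> 'o \<Rightarrow> 'o \<times> 'o" where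
  "lsprodob C XA YB = (L_bp C (fst XA) (fst YB), L_bp C (snd XA) (snd YB))"

definition lspair :: "('o,'a) dsc_data \<Rightarrow> 'o \<times> 'o \<Rightarrow> 'o \<times> 'o \<Rightarrow> 'o \<times> 'o \<Rightarrow> 'a \<times> 'a \<Rightarrow> 'a \<times> 'a \<Rightarrow> 'a \<times> 'a" where
  "lspair C Z XA YB a b = (THE h. h \<in> LShom C Z (lsprodob C XA YB) \<and>
      lscomp C Z h (lsproj1 C XA YB) = a \<and> lscomp C Z h (lsproj2 C XA YB) = b)"

definition lsiso :: "('o,'a) dsc_data \<Rightarrow> 'o \<times> 'o \<Rightarrow> 'o \<times> 'o \<Rightarrow> 'a \<times> 'a \<Rightarrow> bool" where
  "lsiso C P Q h \<longleftrightarrow> h \<in> LShom C P Q \<and>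
     (\<exists>k \<in> LShom C Q P. lscomp C P h k = lsid C P \<and> lscomp C Q k h = lsid C Q)"

definition lsinv :: "('o,'a) dsc_data \<Rightarrow> 'o \<times> 'o \<Rightarrow> 'o \<times> 'o \<Rightarrow> 'a \<times> 'a \<Rightarrow> 'a \<times> 'a" where
  "lsinv C P Q h = (THE k. k \<in> LShom C Q P \<and> lscomp C P h k = lsid C P \<and> lscomp C Q k h = lsid C Q)"

text \<open>T is given by its object part Tob and its arrow part Tar X Y : L_!(X,Y) \<rightarrow> LS(T X, T Y).\<close>

definition phi :: "('o,'a) dsc_data \<Rightarrow> ('o \<Rightarrow> 'o \<times> 'o) \<Rightarrow> ('o \<Rightarrow> 'o \<Rightarrow> 'a \<Rightarrow> 'a \<times> 'a) \<Rightarrow> 'o \<Rightarrow> 'o \<Rightarrow> 'a \<times> 'a" where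
  "phi C Tob Tar X Y = lspair C (Tob (L_bp C X Y)) (X, snd (Tob X)) (Y, snd (Tob Y))
      (Tar (L_bp C X Y) X (kpi1 C X Y)) (Tar (L_bp C X Y) Y (kpi2 C X Y))"

definition i2 :: "('o,'a) dsc_data \<Rightarrow> ('o \<Rightarrow> 'o \<times> 'o) \<Rightarrow> ('o \<Rightarrow> 'o \<Rightarrow> 'a \<Rightarrow> 'a \<times> 'a) \<Rightarrow> 'o \<Rightarrow> 'o \<Rightarrow> 'a \<times> 'a" where
  "i2 C Tob Tar X Y =
     lscomp C (L_bp C X Y, snd (Tob Y))
       (kid C (L_bp C X Y), L_tenm C (weak C (L_bp C X Y)) (L_in2 C (snd (Tob X)) (snd (Tob Y))))
       (lsinv C (Tob (L_bp C X Y)) (L_bp C X Y, L_bp C (snd (Tob X)) (snd (Tob Y))) (phi C Tob Tar X Y))"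

text \<open>Unit \<eta>_X : X \<rightarrow> U F X = !X of the co-Kleisli adjunction, and the lax structure
  n_{A,B} : U A \<times> U B \<rightarrow> U(A\<otimes>B) of U induced by the strong structure m of F:
  n = \<eta> ; U(m^{-1}) ; U(\<epsilon>_A \<otimes> \<epsilon>_B), \<epsilon> = d.\<close>
definition eta :: "('o,'a) dsc_data \<Rightarrow> 'o \<Rightarrow> 'a" where
  "eta C X = L_id C (L_bang C X)"

definition nlax :: "('o,'a) dsc_data \<Rightarrow> 'o \<Rightarrow> 'o \<Rightarrow> 'a" where
  "nlax C A B = kcomp C (L_bp C A B) (eta C (L_bp C A B))
      (kcomp C (L_bang C (L_bp C A B))
         (Um C (L_bang C (L_bp C A B))
             (inv_of C (L_ten C (L_bang C A) (L_bang C B)) (L_bang C (L_bp C A B)) (L_sly C A B)))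
         (Um C (L_ten C (L_bang C A) (L_bang C B)) (L_tenm C (L_der C A) (L_der C B))))"

text \<open>\<lbrace>(f,u)\<rbrace> = \<langle>\<pi>_1;f, (\<eta>_X \<times> id_{U A}); n_{F X, A}; U(u)\<rangle> : X \<times> U A \<rightarrow> Y \<times> U B in L_!.\<close>
definition bracket :: "('o,'a) dsc_data \<Rightarrow> 'o \<Rightarrow> 'o \<Rightarrow> 'o \<Rightarrow> 'o \<Rightarrow> 'a \<Rightarrow> 'a \<Rightarrow> 'a" where
  "bracket C X A Y B f u =
     kpair C Y B (kcomp C (L_bp C X A) (kpi1 C X A) f)
       (kcomp C (L_bp C X A)
          (kcomp C (L_bp C X A) (kprod C X A (L_bang C X) A (eta C X) (kid C A)) (nlax C (L_bang C X) A))
          (Um C (L_ten C (L_bang C X) A) u))"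

definition Wm :: "('o,'a) dsc_data \<Rightarrow> 'o \<Rightarrow> 'o \<Rightarrow> 'o \<Rightarrow> 'o \<Rightarrow> 'a \<Rightarrow> 'a \<Rightarrow> 'a \<times> 'a" where
  "Wm C X A Y B f u = (bracket C X A Y B f u,
      L_cmp C (L_tenm C (Fm C (L_bp C X A) (kpi1 C X A)) (L_id C A)) u)"

definition is_T_functor :: "('o,'a) dsc_data \<Rightarrow> ('o \<Rightarrow> 'o \<times> 'o) \<Rightarrow> ('o \<Rightarrow> 'o \<Rightarrow> 'a \<Rightarrow> 'a \<times> 'a) \<Rightarrow> bool" where
  "is_T_functor C Tob Tar \<longleftrightarrow>
    (\<forall>X Y f. f \<in> hom C (L_bang C X) Y \<longrightarrow> Tar X Y f \<in> LShom C (Tob X) (Tob Y)) \<and>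
    (\<forall>X. Tar X X (kid C X) = lsid C (Tob X)) \<and>
    (\<forall>X Y Z f g. f \<in> hom C (L_bang C X) Y \<longrightarrow> g \<in> hom C (L_bang C Y) Z \<longrightarrow>
        Tar X Z (kcomp C X f g) = lscomp C (Tob X) (Tar X Y f) (Tar Y Z g))"

definition axiom_t1 :: "('o,'a) dsc_data \<Rightarrow> ('o \<Rightarrow> 'o \<times> 'o) \<Rightarrow> ('o \<Rightarrow> 'o \<Rightarrow> 'a \<Rightarrow> 'a \<times> 'a) \<Rightarrow> bool" where
  "axiom_t1 C Tob Tar \<longleftrightarrow>
    (\<forall>X. fst (Tob X) = X) \<and>
    (\<forall>X Y f. f \<in> hom C (L_bang C X) Y \<longrightarrow> fst (Tar X Y f) = f) \<and>
    (\<forall>X Y. lsiso C (Tob (L_bp C X Y)) (L_bp C X Y, L_bp C (snd (Tob X)) (snd (Tob Y)))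
                   (phi C Tob Tar X Y))"

text \<open>(t.2): T(U A) = (U A, A); U is the identity on objects.\<close>
definition axiom_t2 :: "('o,'a) dsc_data \<Rightarrow> ('o \<Rightarrow> 'o \<times> 'o) \<Rightarrow> bool" where
  "axiom_t2 C Tob \<longleftrightarrow> (\<forall>A. Tob A = (A, A))"

definition axiom_t3 :: "('o,'a) dsc_data \<Rightarrow> ('o \<Rightarrow> 'o \<times> 'o) \<Rightarrow> ('o \<Rightarrow> 'o \<Rightarrow> 'a \<Rightarrow> 'a \<times> 'a) \<Rightarrow> bool" where
  "axiom_t3 C Tob Tar \<longleftrightarrow>
    (\<forall>X A Y B f u. (f, u) \<in> LShom C (X, A) (Y, B) \<longrightarrow>
       lscomp C (L_bp C X A, A) (Wm C X A Y B f u) (i2 C Tob Tar Y B) =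
       lscomp C (L_bp C X A, snd (Tob A)) (i2 C Tob Tar X A)
              (Tar (L_bp C X A) (L_bp C Y B) (bracket C X A Y B f u)))"

definition coKleisli_is_GDSC :: "('o,'a) dsc_data \<Rightarrow> bool" where
  "coKleisli_is_GDSC C \<longleftrightarrow> (\<exists>Tob Tar. is_T_functor C Tob Tar \<and>
      axiom_t1 C Tob Tar \<and> axiom_t2 C Tob \<and> axiom_t3 C Tob Tar)"

end

theory Submission
  imports Defs
begin

text \<open>The tangent functor is \<open>T X = (X, X)\<close> and \<open>T f = (f, df X \<cdot> f)\<close>: a co-Kleisli map
  \<open>f : !X \<rightarrow> Y\<close> is sent to itself together with its derivative. Functoriality of \<open>T\<close> is the chain
  rule, i.e. the axiom for \<open>df \<cdot> p\<close>. The comparison map \<open>phi\<close> is the identity of LS, which gives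
  (t.1), and (t.2) holds by construction. In (t.3) both sides have first component
  \<open>\<lbrace>(f, u)\<rbrace> = \<langle>!pr1 \<cdot> f, m\<inverse> \<cdot> (id \<otimes> d) \<cdot> u\<rangle>\<close>, and the second components agree because
  \<open>(id \<otimes> in2) \<cdot> df (X \<oplus> A) \<cdot> m\<inverse> \<cdot> (id \<otimes> d) = !pr1 \<otimes> id\<close>. To see this, write
  \<open>m\<inverse> = c \<cdot> (!pr1 \<otimes> !pr2)\<close> and expand \<open>df \<cdot> c\<close> by the Leibniz rule: the term differentiating the
  left factor dies on \<open>in2\<close> because \<open>in2 \<cdot> pr1 = 0\<close>, and the other one reduces to a weakening by
  \<open>df \<cdot> d = w \<otimes> id\<close>, which the counit law of \<open>c\<close> absorbs.\<close>

locale diff_seely =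
  fixes C :: "('o,'a) dsc_data"
  assumes ax: "differential_seely_category C"
begin

abbreviation ar where "ar \<equiv> L_ar C"
abbreviation dm where "dm \<equiv> L_dom C"
abbreviation cd where "cd \<equiv> L_cod C"
abbreviation I where "I \<equiv> L_id C"
abbreviation cmp (infixr "\<cdot>" 55) where "f \<cdot> g \<equiv> L_cmp C f g"
abbreviation Z where "Z \<equiv> L_zero C"
abbreviation pl (infixl "\<oplus>" 52) where "f \<oplus> g \<equiv> L_plus C f g"
abbreviation ten where "ten \<equiv> L_ten C"
abbreviation tm (infixr "\<otimes>" 60) where "f \<otimes> g \<equiv> L_tenm C f g"
abbreviation one where "one \<equiv> L_one C"
abbreviation sy where "sy \<equiv> L_sym C"
abbreviation bp where "bp \<equiv> L_bp C"
abbreviation pr1 where "pr1 \<equiv> L_pr1 C"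
abbreviation pr2 where "pr2 \<equiv> L_pr2 C"
abbreviation in1 where "in1 \<equiv> L_in1 C"
abbreviation in2 where "in2 \<equiv> L_in2 C"
abbreviation zo where "zo \<equiv> L_zo C"
abbreviation bg where "bg \<equiv> L_bang C"
abbreviation bm where "bm \<equiv> L_bangm C"
abbreviation d where "d \<equiv> L_der C"
abbreviation p where "p \<equiv> L_prm C"
abbreviation m where "m \<equiv> L_sly C"
abbreviation m0 where "m0 \<equiv> L_sly0 C"
abbreviation df where "df \<equiv> L_dif C"
abbreviation mi where "mi X Y \<equiv> inv_of C (ten (bg X) (bg Y)) (bg (bp X Y)) (m X Y)"
abbreviation m0i where "m0i \<equiv> inv_of C one (bg zo) m0"
abbreviation w where "w \<equiv> weak C"
abbreviation c where "c \<equiv> contr C"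
abbreviation F where "F \<equiv> Fm C"

lemma hom_iff: "f \<in> hom C A B \<longleftrightarrow> f \<in> ar \<and> dm f = A \<and> cd f = B"
  by (auto simp: hom_def)

lemma dsc_axioms:
  "category_ax C" "additive_ax C" "monoidal_ax C" "biproduct_ax C"
  "comonad_ax C" "seely_ax C" "differential_ax C"
  using ax by (simp_all add: differential_seely_category_def)

lemmas category = dsc_axioms(1)[unfolded category_ax_def hom_iff]
lemmas additive = dsc_axioms(2)[unfolded additive_ax_def hom_iff]
lemmas monoidal = dsc_axioms(3)[unfolded monoidal_ax_def hom_iff]
lemmas biproduct = dsc_axioms(4)[unfolded biproduct_ax_def hom_iff]
lemmas comonad = dsc_axioms(5)[unfolded comonad_ax_def hom_iff]
lemmas seely = dsc_axioms(6)[unfolded seely_ax_def]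
lemmas differential = dsc_axioms(7)[unfolded differential_ax_def hom_iff]

lemma id_typed[simp]: "I A \<in> ar" "dm (I A) = A" "cd (I A) = A"
  using category by auto

lemma comp_typed[simp]:
  "f \<in> ar \<Longrightarrow> g \<in> ar \<Longrightarrow> cd f = dm g \<Longrightarrow> f \<cdot> g \<in> ar"
  "f \<in> ar \<Longrightarrow> g \<in> ar \<Longrightarrow> cd f = dm g \<Longrightarrow> dm (f \<cdot> g) = dm f"
  "f \<in> ar \<Longrightarrow> g \<in> ar \<Longrightarrow> cd f = dm g \<Longrightarrow> cd (f \<cdot> g) = cd g"
  using category by auto

lemma comp_id_left[simp]: "f \<in> ar \<Longrightarrow> dm f = A \<Longrightarrow> I A \<cdot> f = f"
  using category by (auto; fail)

lemma comp_id_right[simp]: "f \<in> ar \<Longrightarrow> cd f = A \<Longrightarrow> f \<cdot> I A = f"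
  using category by (auto; fail)

lemma comp_assoc[simp]:
  "f \<in> ar \<Longrightarrow> g \<in> ar \<Longrightarrow> h \<in> ar \<Longrightarrow> cd f = dm g \<Longrightarrow> cd g = dm h \<Longrightarrow>
   (f \<cdot> g) \<cdot> h = f \<cdot> g \<cdot> h"
  using category by (auto; fail)

lemma comp_prefix_eq:
  "a \<cdot> b = e \<Longrightarrow> a \<in> ar \<Longrightarrow> b \<in> ar \<Longrightarrow> h \<in> ar \<Longrightarrow> cd a = dm b \<Longrightarrow> cd b = dm h \<Longrightarrow>
   a \<cdot> b \<cdot> h = e \<cdot> h"
  by (metis comp_assoc)

lemma comp_inverse_cancel[simp]:
  "a \<cdot> b = I (dm h) \<Longrightarrow> a \<in> ar \<Longrightarrow> b \<in> ar \<Longrightarrow> h \<in> ar \<Longrightarrow> cd a = dm b \<Longrightarrow> cd b = dm h \<Longrightarrow>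
   a \<cdot> b \<cdot> h = h"
  by (metis comp_assoc comp_id_left)

lemma zero_typed[simp]: "Z A B \<in> ar" "dm (Z A B) = A" "cd (Z A B) = B"
  using additive by auto

lemma plus_typed[simp]:
  "f \<in> ar \<Longrightarrow> g \<in> ar \<Longrightarrow> dm g = dm f \<Longrightarrow> cd g = cd f \<Longrightarrow> f \<oplus> g \<in> ar"
  "f \<in> ar \<Longrightarrow> g \<in> ar \<Longrightarrow> dm g = dm f \<Longrightarrow> cd g = cd f \<Longrightarrow> dm (f \<oplus> g) = dm f"
  "f \<in> ar \<Longrightarrow> g \<in> ar \<Longrightarrow> dm g = dm f \<Longrightarrow> cd g = cd f \<Longrightarrow> cd (f \<oplus> g) = cd f"
  using additive by (metis (no_types))+

lemma plus_zero[simp]: "f \<in> ar \<Longrightarrow> dm f = A \<Longrightarrow> cd f = B \<Longrightarrow> f \<oplus> Z A B = f"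
  using additive by (auto; fail)

lemma zero_plus[simp]: "f \<in> ar \<Longrightarrow> dm f = A \<Longrightarrow> cd f = B \<Longrightarrow> Z A B \<oplus> f = f"
  using additive by (metis zero_typed)

lemma plus_comp:
  "f \<in> ar \<Longrightarrow> g \<in> ar \<Longrightarrow> h \<in> ar \<Longrightarrow> dm g = dm f \<Longrightarrow> cd g = cd f \<Longrightarrow> cd f = dm h \<Longrightarrow>
   (f \<oplus> g) \<cdot> h = f \<cdot> h \<oplus> g \<cdot> h"
  using additive by (auto; fail)

lemma comp_plus:
  "f \<in> ar \<Longrightarrow> g \<in> ar \<Longrightarrow> h \<in> ar \<Longrightarrow> dm g = dm f \<Longrightarrow> cd g = cd f \<Longrightarrow> cd h = dm f \<Longrightarrow>
   h \<cdot> (f \<oplus> g) = h \<cdot> f \<oplus> h \<cdot> g"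
  using additive by (auto; fail)

lemma zero_comp[simp]: "h \<in> ar \<Longrightarrow> dm h = B \<Longrightarrow> Z A B \<cdot> h = Z A (cd h)"
  using additive by (auto; fail)

lemma comp_zero[simp]: "h \<in> ar \<Longrightarrow> cd h = B \<Longrightarrow> h \<cdot> Z B D = Z (dm h) D"
  using additive by (auto; fail)

lemma tensor_typed[simp]:
  "f \<in> ar \<Longrightarrow> g \<in> ar \<Longrightarrow> f \<otimes> g \<in> ar"
  "f \<in> ar \<Longrightarrow> g \<in> ar \<Longrightarrow> dm (f \<otimes> g) = ten (dm f) (dm g)"
  "f \<in> ar \<Longrightarrow> g \<in> ar \<Longrightarrow> cd (f \<otimes> g) = ten (cd f) (cd g)"
  using monoidal by auto

lemma tensor_id[simp]: "I A \<otimes> I B = I (ten A B)"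
  using monoidal by (auto; fail)

lemma comp_tensor:
  "f \<in> ar \<Longrightarrow> g \<in> ar \<Longrightarrow> f' \<in> ar \<Longrightarrow> g' \<in> ar \<Longrightarrow> cd f = dm g \<Longrightarrow> cd f' = dm g' \<Longrightarrow>
   (f \<otimes> f') \<cdot> (g \<otimes> g') = (f \<cdot> g) \<otimes> (f' \<cdot> g')"
  using monoidal by (auto; fail)

lemma comp_tensor_prefix:
  "f \<in> ar \<Longrightarrow> g \<in> ar \<Longrightarrow> f' \<in> ar \<Longrightarrow> g' \<in> ar \<Longrightarrow> h \<in> ar \<Longrightarrow> cd f = dm g \<Longrightarrow> cd f' = dm g' \<Longrightarrow>
   dm h = ten (cd g) (cd g') \<Longrightarrow> (f \<otimes> f') \<cdot> (g \<otimes> g') \<cdot> h = ((f \<cdot> g) \<otimes> (f' \<cdot> g')) \<cdot> h"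
  by (subst comp_prefix_eq[OF comp_tensor]) auto

lemma ten_assoc[simp]: "ten (ten A B) D = ten A (ten B D)"
  using monoidal by (auto; fail)

lemma ten_unit[simp]: "ten one A = A" "ten A one = A"
  using monoidal by auto

lemma tensor_assoc[simp]: "f \<in> ar \<Longrightarrow> g \<in> ar \<Longrightarrow> h \<in> ar \<Longrightarrow> (f \<otimes> g) \<otimes> h = f \<otimes> g \<otimes> h"
  using monoidal by (auto; fail)

lemma tensor_unit[simp]: "f \<in> ar \<Longrightarrow> I one \<otimes> f = f" "f \<in> ar \<Longrightarrow> f \<otimes> I one = f"
  using monoidal by auto

lemma sym_typed[simp]: "sy A B \<in> ar" "dm (sy A B) = ten A B" "cd (sy A B) = ten B A"
  using monoidal by auto

lemma sym_natural: "f \<in> ar \<Longrightarrow> g \<in> ar \<Longrightarrow> (f \<otimes> g) \<cdot> sy (cd f) (cd g) = sy (dm f) (dm g) \<cdot> (g \<otimes> f)"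
  using monoidal by (auto; fail)

lemma tensor_zero[simp]:
  "h \<in> ar \<Longrightarrow> Z A B \<otimes> h = Z (ten A (dm h)) (ten B (cd h))"
  "h \<in> ar \<Longrightarrow> h \<otimes> Z A B = Z (ten (dm h) A) (ten (cd h) B)"
  using monoidal by auto

lemma biproduct_typed[simp]:
  "pr1 A B \<in> ar" "dm (pr1 A B) = bp A B" "cd (pr1 A B) = A"
  "pr2 A B \<in> ar" "dm (pr2 A B) = bp A B" "cd (pr2 A B) = B"
  "in1 A B \<in> ar" "dm (in1 A B) = A" "cd (in1 A B) = bp A B"
  "in2 A B \<in> ar" "dm (in2 A B) = B" "cd (in2 A B) = bp A B"
  using biproduct by auto

lemma inj_proj[simp]:
  "in1 A B \<cdot> pr1 A B = I A" "in1 A B \<cdot> pr2 A B = Z A B"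
  "in2 A B \<cdot> pr1 A B = Z B A" "in2 A B \<cdot> pr2 A B = I B"
  using biproduct by auto

lemma proj_inj_sum: "pr1 A B \<cdot> in1 A B \<oplus> pr2 A B \<cdot> in2 A B = I (bp A B)"
  using biproduct by (auto; fail)

lemma bang_typed[simp]:
  "f \<in> ar \<Longrightarrow> bm f \<in> ar" "f \<in> ar \<Longrightarrow> dm (bm f) = bg (dm f)" "f \<in> ar \<Longrightarrow> cd (bm f) = bg (cd f)"
  using comonad by auto

lemma bang_id[simp]: "bm (I A) = I (bg A)"
  using comonad by (auto; fail)

lemma bang_comp: "f \<in> ar \<Longrightarrow> g \<in> ar \<Longrightarrow> cd f = dm g \<Longrightarrow> bm (f \<cdot> g) = bm f \<cdot> bm g"
  using comonad by (auto; fail)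

lemma der_prm_typed[simp]:
  "d A \<in> ar" "dm (d A) = bg A" "cd (d A) = A"
  "p A \<in> ar" "dm (p A) = bg A" "cd (p A) = bg (bg A)"
  using comonad by auto

lemma der_natural: "f \<in> ar \<Longrightarrow> bm f \<cdot> d (cd f) = d (dm f) \<cdot> f"
  using comonad by (auto; fail)

lemma prm_natural: "f \<in> ar \<Longrightarrow> p (dm f) \<cdot> bm (bm f) = bm f \<cdot> p (cd f)"
  using comonad by (auto; fail)

lemma prm_der[simp]: "p A \<cdot> d (bg A) = I (bg A)" "p A \<cdot> bm (d A) = I (bg A)"
  using comonad by auto

lemma prm_coassoc: "p A \<cdot> p (bg A) = p A \<cdot> bm (p A)"
  using comonad by (auto; fail)

lemma dif_typed[simp]: "df A \<in> ar" "dm (df A) = ten (bg A) A" "cd (df A) = bg A"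
  using differential by auto

lemma dif_natural: "f \<in> ar \<Longrightarrow> df (dm f) \<cdot> bm f = (bm f \<otimes> f) \<cdot> df (cd f)"
  using differential by (auto; fail)

lemma dif_contr: "df A \<cdot> c A = (c A \<otimes> I A) \<cdot>
    (I (bg A) \<otimes> df A \<oplus> (I (bg A) \<otimes> sy (bg A) A) \<cdot> (df A \<otimes> I (bg A)))"
  using differential by (auto; fail)

lemma dif_der: "df A \<cdot> d A = w A \<otimes> I A"
  using differential by (auto; fail)

lemma dif_prm: "df A \<cdot> p A = ((c A \<otimes> I A) \<cdot> (p A \<otimes> df A)) \<cdot> df (bg A)"
  using differential by (auto; fail)

lemma seely_iso: "is_iso C (ten (bg X) (bg Y)) (bg (bp X Y)) (m X Y)"
  using seely by (auto; fail)

lemma seely_unit_iso: "is_iso C one (bg zo) m0"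
  using seely by (auto; fail)

lemma seely_natural: "f \<in> hom C (bg X) X' \<Longrightarrow> g \<in> hom C (bg Y) Y' \<Longrightarrow>
    (F X f \<otimes> F Y g) \<cdot> m X' Y' = m X Y \<cdot> F (bp X Y) (kprod C X Y X' Y' f g)"
  using seely by (auto; fail)

lemma seely_unit_left: "((m0 \<otimes> I (bg X)) \<cdot> m zo X) \<cdot> F (bp zo X) (kpi2 C zo X) = I (bg X)"
  using seely by (auto; fail)

lemma seely_unit_right: "((I (bg X) \<otimes> m0) \<cdot> m X zo) \<cdot> F (bp X zo) (kpi1 C X zo) = I (bg X)"
  using seely by (auto; fail)

lemma is_iso_inv_of:
  assumes "is_iso C A B f"
  shows "inv_of C A B f \<in> ar" "dm (inv_of C A B f) = B" "cd (inv_of C A B f) = A"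
    "f \<cdot> inv_of C A B f = I A" "inv_of C A B f \<cdot> f = I B"
proof -
  obtain g where g: "g \<in> hom C B A" "f \<cdot> g = I A" "g \<cdot> f = I B" "f \<in> hom C A B"
    using assms unfolding is_iso_def by blast
  have "\<exists>!g. g \<in> hom C B A \<and> f \<cdot> g = I A \<and> g \<cdot> f = I B"
  proof (rule ex1I[of _ g])
    show "g \<in> hom C B A \<and> f \<cdot> g = I A \<and> g \<cdot> f = I B" using g by blast
    fix g' assume g': "g' \<in> hom C B A \<and> f \<cdot> g' = I A \<and> g' \<cdot> f = I B"
    have "g' = g' \<cdot> (f \<cdot> g)" using g' g by (simp add: hom_iff)
    also have "\<dots> = (g' \<cdot> f) \<cdot> g" using g' g by (subst comp_assoc) (auto simp: hom_iff)
    also have "\<dots> = g" using g' g by (simp add: hom_iff)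
    finally show "g' = g" .
  qed
  then have "inv_of C A B f \<in> hom C B A \<and> f \<cdot> inv_of C A B f = I A \<and> inv_of C A B f \<cdot> f = I B"
    unfolding inv_of_def by (rule theI')
  then show "inv_of C A B f \<in> ar" "dm (inv_of C A B f) = B" "cd (inv_of C A B f) = A"
    "f \<cdot> inv_of C A B f = I A" "inv_of C A B f \<cdot> f = I B"
    by (auto simp: hom_iff)
qed

lemma inverse_unique:
  assumes "k \<cdot> j = I (dm g)" "j \<cdot> g = I (cd k)" "k \<in> ar" "j \<in> ar" "g \<in> ar"
    "cd k = dm j" "cd j = dm g"
  shows "k = g"
proof -
  have "k = k \<cdot> (j \<cdot> g)" using assms by simp
  also have "\<dots> = (k \<cdot> j) \<cdot> g" using assms by (subst comp_assoc) auto
  also have "\<dots> = g" using assms by simp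
  finally show ?thesis .
qed

lemma seely_typed[simp]:
  "m X Y \<in> ar" "dm (m X Y) = ten (bg X) (bg Y)" "cd (m X Y) = bg (bp X Y)"
  "mi X Y \<in> ar" "dm (mi X Y) = bg (bp X Y)" "cd (mi X Y) = ten (bg X) (bg Y)"
  "m0 \<in> ar" "dm m0 = one" "cd m0 = bg zo"
  "m0i \<in> ar" "dm m0i = bg zo" "cd m0i = one"
  using seely_iso[of X Y] seely_unit_iso is_iso_inv_of[OF seely_iso[of X Y]]
    is_iso_inv_of[OF seely_unit_iso]
  by (auto simp: is_iso_def hom_iff)

lemma seely_inverse[simp]:
  "m X Y \<cdot> mi X Y = I (ten (bg X) (bg Y))" "mi X Y \<cdot> m X Y = I (bg (bp X Y))"
  "m0 \<cdot> m0i = I one" "m0i \<cdot> m0 = I (bg zo)"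
  using is_iso_inv_of[OF seely_iso[of X Y]] is_iso_inv_of[OF seely_unit_iso] by auto

subsection \<open>The co-Kleisli category and the functor F\<close>

lemma Fm_eq: "F X f = p X \<cdot> bm f"
  by (simp add: Fm_def)

lemma kcomp_eq: "kcomp C X f g = F X f \<cdot> g"
  by (simp add: kcomp_def Fm_def)

lemma Fm_typed[simp]:
  "f \<in> ar \<Longrightarrow> dm f = bg X \<Longrightarrow> F X f \<in> ar"
  "f \<in> ar \<Longrightarrow> dm f = bg X \<Longrightarrow> dm (F X f) = bg X"
  "f \<in> ar \<Longrightarrow> dm f = bg X \<Longrightarrow> cd (F X f) = bg (cd f)"
  by (simp_all add: Fm_eq)

lemma Fm_der[simp]: "f \<in> ar \<Longrightarrow> dm f = bg X \<Longrightarrow> cd f = Y \<Longrightarrow> F X f \<cdot> d Y = f"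
  using der_natural[of f] by (simp add: Fm_eq)

lemma Fm_der_prefix[simp]:
  "f \<in> ar \<Longrightarrow> dm f = bg X \<Longrightarrow> cd f = Y \<Longrightarrow> h \<in> ar \<Longrightarrow> dm h = Y \<Longrightarrow> F X f \<cdot> d Y \<cdot> h = f \<cdot> h"
  by (subst comp_prefix_eq[OF Fm_der]) auto

lemma Fm_kid[simp]: "F X (d X) = I (bg X)"
  by (simp add: Fm_eq)

lemma Fm_id[simp]: "F X (I (bg X)) = p X"
  by (simp add: Fm_eq)

lemma Fm_der_comp: "g \<in> ar \<Longrightarrow> dm g = X \<Longrightarrow> F X (d X \<cdot> g) = bm g"
  by (simp add: Fm_eq bang_comp)

lemma Fm_comp:
  assumes "f \<in> ar" "dm f = bg X" "g \<in> ar" "dm g = bg (cd f)"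
  shows "F X f \<cdot> F (cd f) g = F X (F X f \<cdot> g)"
proof -
  have "F X f \<cdot> F (cd f) g = p X \<cdot> (bm f \<cdot> p (cd f)) \<cdot> bm g"
    using assms by (simp add: Fm_eq)
  also have "\<dots> = p X \<cdot> (p (bg X) \<cdot> bm (bm f)) \<cdot> bm g"
    using assms prm_natural[of f] by simp
  also have "\<dots> = (p X \<cdot> p (bg X)) \<cdot> bm (bm f) \<cdot> bm g"
    using assms by simp
  also have "\<dots> = (p X \<cdot> bm (p X)) \<cdot> bm (bm f) \<cdot> bm g"
    using prm_coassoc by simp
  also have "\<dots> = F X (F X f \<cdot> g)"
    using assms by (simp add: Fm_eq bang_comp)
  finally show ?thesis .
qed

lemma kpi_eq: "kpi1 C X Y = d (bp X Y) \<cdot> pr1 X Y" "kpi2 C X Y = d (bp X Y) \<cdot> pr2 X Y"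
  by (simp_all add: kpi1_def kpi2_def)

lemma kpi_typed[simp]:
  "kpi1 C X Y \<in> ar" "dm (kpi1 C X Y) = bg (bp X Y)" "cd (kpi1 C X Y) = X"
  "kpi2 C X Y \<in> ar" "dm (kpi2 C X Y) = bg (bp X Y)" "cd (kpi2 C X Y) = Y"
  by (simp_all add: kpi_eq)

lemma Fm_kpi[simp]: "F (bp X Y) (kpi1 C X Y) = bm (pr1 X Y)" "F (bp X Y) (kpi2 C X Y) = bm (pr2 X Y)"
  by (simp_all add: kpi_eq Fm_der_comp)

lemma Fm_comp_kpi:
  "h \<in> ar \<Longrightarrow> dm h = bg X \<Longrightarrow> cd h = bp Y W \<Longrightarrow> F X h \<cdot> kpi1 C Y W = h \<cdot> pr1 Y W"
  "h \<in> ar \<Longrightarrow> dm h = bg X \<Longrightarrow> cd h = bp Y W \<Longrightarrow> F X h \<cdot> kpi2 C Y W = h \<cdot> pr2 Y W"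
  by (simp_all add: kpi_eq)

lemma kpair_eq: "kpair C Y W f g = f \<cdot> in1 Y W \<oplus> g \<cdot> in2 Y W"
  by (simp add: kpair_def)

lemma kpair_typed[simp]:
  "f \<in> ar \<Longrightarrow> g \<in> ar \<Longrightarrow> dm g = dm f \<Longrightarrow> cd f = Y \<Longrightarrow> cd g = W \<Longrightarrow> kpair C Y W f g \<in> ar"
  "f \<in> ar \<Longrightarrow> g \<in> ar \<Longrightarrow> dm g = dm f \<Longrightarrow> cd f = Y \<Longrightarrow> cd g = W \<Longrightarrow> dm (kpair C Y W f g) = dm f"
  "f \<in> ar \<Longrightarrow> g \<in> ar \<Longrightarrow> dm g = dm f \<Longrightarrow> cd f = Y \<Longrightarrow> cd g = W \<Longrightarrow> cd (kpair C Y W f g) = bp Y W"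
  by (simp_all add: kpair_eq)

lemma kpair_proj[simp]:
  "f \<in> ar \<Longrightarrow> g \<in> ar \<Longrightarrow> dm g = dm f \<Longrightarrow> cd f = Y \<Longrightarrow> cd g = W \<Longrightarrow> kpair C Y W f g \<cdot> pr1 Y W = f"
  "f \<in> ar \<Longrightarrow> g \<in> ar \<Longrightarrow> dm g = dm f \<Longrightarrow> cd f = Y \<Longrightarrow> cd g = W \<Longrightarrow> kpair C Y W f g \<cdot> pr2 Y W = g"
  by (simp_all add: kpair_eq plus_comp)

lemma biproduct_ext:
  assumes "f \<in> ar" "g \<in> ar" "dm g = dm f" "cd f = bp A B" "cd g = bp A B"
    "f \<cdot> pr1 A B = g \<cdot> pr1 A B" "f \<cdot> pr2 A B = g \<cdot> pr2 A B"
  shows "f = g"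
proof -
  have "f = f \<cdot> (pr1 A B \<cdot> in1 A B \<oplus> pr2 A B \<cdot> in2 A B)"
    using assms by (simp add: proj_inj_sum)
  also have "\<dots> = (f \<cdot> pr1 A B) \<cdot> in1 A B \<oplus> (f \<cdot> pr2 A B) \<cdot> in2 A B"
    using assms(1-5) by (simp add: comp_plus)
  also have "\<dots> = (g \<cdot> pr1 A B) \<cdot> in1 A B \<oplus> (g \<cdot> pr2 A B) \<cdot> in2 A B"
    by (simp only: assms(6,7))
  also have "\<dots> = g \<cdot> (pr1 A B \<cdot> in1 A B \<oplus> pr2 A B \<cdot> in2 A B)"
    using assms(1-5) by (simp add: comp_plus)
  also have "\<dots> = g"
    using assms by (simp add: proj_inj_sum)
  finally show ?thesis .
qed

lemma kprod_eq: "f \<in> ar \<Longrightarrow> g \<in> ar \<Longrightarrow> dm f = bg X \<Longrightarrow> dm g = bg Y \<Longrightarrow>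
    kprod C X Y X' Y' f g = kpair C X' Y' (bm (pr1 X Y) \<cdot> f) (bm (pr2 X Y) \<cdot> g)"
  by (simp add: kprod_def kcomp_eq)

lemma kprod_typed[simp]:
  "f \<in> ar \<Longrightarrow> g \<in> ar \<Longrightarrow> dm f = bg X \<Longrightarrow> dm g = bg Y \<Longrightarrow> cd f = X' \<Longrightarrow> cd g = Y' \<Longrightarrow>
   kprod C X Y X' Y' f g \<in> ar"
  "f \<in> ar \<Longrightarrow> g \<in> ar \<Longrightarrow> dm f = bg X \<Longrightarrow> dm g = bg Y \<Longrightarrow> cd f = X' \<Longrightarrow> cd g = Y' \<Longrightarrow>
   dm (kprod C X Y X' Y' f g) = bg (bp X Y)"
  "f \<in> ar \<Longrightarrow> g \<in> ar \<Longrightarrow> dm f = bg X \<Longrightarrow> dm g = bg Y \<Longrightarrow> cd f = X' \<Longrightarrow> cd g = Y' \<Longrightarrow>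
   cd (kprod C X Y X' Y' f g) = bp X' Y'"
  by (simp_all add: kprod_eq)

lemma Fm_comp_kprod:
  assumes "h \<in> ar" "dm h = bg X" "cd h = bp Y W" "f \<in> ar" "g \<in> ar"
    "dm f = bg Y" "dm g = bg W" "cd f = Y'" "cd g = W'"
  shows "F X h \<cdot> kprod C Y W Y' W' f g =
    kpair C Y' W' (F X (h \<cdot> pr1 Y W) \<cdot> f) (F X (h \<cdot> pr2 Y W) \<cdot> g)"
proof -
  have "F X h \<cdot> kprod C Y W Y' W' f g =
      ((F X h \<cdot> F (bp Y W) (kpi1 C Y W)) \<cdot> f) \<cdot> in1 Y' W' \<oplus>
      ((F X h \<cdot> F (bp Y W) (kpi2 C Y W)) \<cdot> g) \<cdot> in2 Y' W'"
    using assms by (simp add: kprod_def kcomp_eq kpair_eq comp_plus del: Fm_kpi)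
  also have "\<dots> = (F X (h \<cdot> pr1 Y W) \<cdot> f) \<cdot> in1 Y' W' \<oplus> (F X (h \<cdot> pr2 Y W) \<cdot> g) \<cdot> in2 Y' W'"
    using assms Fm_comp[of h X "kpi1 C Y W"] Fm_comp[of h X "kpi2 C Y W"]
    by (simp add: Fm_comp_kpi del: Fm_kpi)
  finally show ?thesis
    using assms by (simp add: kpair_eq)
qed

lemma kterm_eq: "kterm C X = Z (bg X) zo"
  by (simp add: kterm_def)

lemma kdiag_eq: "kdiag C X = kpair C X X (d X) (d X)"
  by (simp add: kdiag_def kid_def)

lemma contr_eq: "c X = F X (kdiag C X) \<cdot> mi X X"
  by (simp add: contr_def)

lemma weak_eq: "w X = F X (kterm C X) \<cdot> m0i"
  by (simp add: weak_def)

lemma kterm_typed[simp]: "kterm C X \<in> ar" "dm (kterm C X) = bg X" "cd (kterm C X) = zo"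
  by (simp_all add: kterm_eq)

lemma kdiag_typed[simp]: "kdiag C X \<in> ar" "dm (kdiag C X) = bg X" "cd (kdiag C X) = bp X X"
  by (simp_all add: kdiag_eq)

lemma kdiag_proj[simp]: "kdiag C X \<cdot> pr1 X X = d X" "kdiag C X \<cdot> pr2 X X = d X"
  by (simp_all add: kdiag_eq)

lemma weak_contr_typed[simp]:
  "w X \<in> ar" "dm (w X) = bg X" "cd (w X) = one"
  "c X \<in> ar" "dm (c X) = bg X" "cd (c X) = ten (bg X) (bg X)"
  by (simp_all add: weak_eq contr_eq)

lemma weak_natural:
  assumes "h \<in> ar" "dm h = bg X"
  shows "F X h \<cdot> w (cd h) = w X"
proof -
  have "F X h \<cdot> w (cd h) = (F X h \<cdot> F (cd h) (kterm C (cd h))) \<cdot> m0i"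
    using assms by (simp add: weak_eq)
  also have "\<dots> = w X"
    using assms Fm_comp[of h X "kterm C (cd h)"] by (simp add: weak_eq kterm_eq)
  finally show ?thesis .
qed

lemma seely_inv_natural:
  assumes "f \<in> ar" "g \<in> ar" "dm f = bg X" "dm g = bg Y"
  shows "mi X Y \<cdot> (F X f \<otimes> F Y g) = F (bp X Y) (kprod C X Y (cd f) (cd g) f g) \<cdot> mi (cd f) (cd g)"
proof -
  have "(F X f \<otimes> F Y g) \<cdot> m (cd f) (cd g) = m X Y \<cdot> F (bp X Y) (kprod C X Y (cd f) (cd g) f g)"
    using assms by (intro seely_natural) (auto simp: hom_iff)
  then have "mi X Y \<cdot> ((F X f \<otimes> F Y g) \<cdot> m (cd f) (cd g)) \<cdot> mi (cd f) (cd g) =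
      mi X Y \<cdot> (m X Y \<cdot> F (bp X Y) (kprod C X Y (cd f) (cd g) f g)) \<cdot> mi (cd f) (cd g)"
    by simp
  then show ?thesis
    using assms by simp
qed

lemma seely_inv_unit_left: "mi zo X \<cdot> (m0i \<otimes> I (bg X)) = F (bp zo X) (kpi2 C zo X)"
proof (rule inverse_unique)
  show "(mi zo X \<cdot> (m0i \<otimes> I (bg X))) \<cdot> (m0 \<otimes> I (bg X)) \<cdot> m zo X = I (dm (F (bp zo X) (kpi2 C zo X)))"
    by (simp add: comp_tensor)
  show "((m0 \<otimes> I (bg X)) \<cdot> m zo X) \<cdot> F (bp zo X) (kpi2 C zo X) = I (cd (mi zo X \<cdot> (m0i \<otimes> I (bg X))))"
    using seely_unit_left[of X] by simp
qed simp_all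

lemma seely_inv_unit_right: "mi X zo \<cdot> (I (bg X) \<otimes> m0i) = F (bp X zo) (kpi1 C X zo)"
proof (rule inverse_unique)
  show "(mi X zo \<cdot> (I (bg X) \<otimes> m0i)) \<cdot> (I (bg X) \<otimes> m0) \<cdot> m X zo = I (dm (F (bp X zo) (kpi1 C X zo)))"
    by (simp add: comp_tensor)
  show "((I (bg X) \<otimes> m0) \<cdot> m X zo) \<cdot> F (bp X zo) (kpi1 C X zo) = I (cd (mi X zo \<cdot> (I (bg X) \<otimes> m0i)))"
    using seely_unit_right[of X] by simp
qed simp_all

lemma contr_tensor_Fm:
  assumes "f \<in> ar" "dm f = bg X" "g \<in> ar" "dm g = bg X"
  shows "c X \<cdot> (F X f \<otimes> F X g) = F X (kpair C (cd f) (cd g) f g) \<cdot> mi (cd f) (cd g)"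
proof -
  let ?K = "kprod C X X (cd f) (cd g) f g"
  have diag: "F X (kdiag C X) \<cdot> ?K = kpair C (cd f) (cd g) f g"
    using assms by (subst Fm_comp_kprod) simp_all
  have "c X \<cdot> (F X f \<otimes> F X g) = F X (kdiag C X) \<cdot> (mi X X \<cdot> (F X f \<otimes> F X g))"
    using assms by (simp add: contr_eq)
  also have "\<dots> = (F X (kdiag C X) \<cdot> F (bp X X) ?K) \<cdot> mi (cd f) (cd g)"
    using assms by (simp add: seely_inv_natural)
  also have "\<dots> = F X (kpair C (cd f) (cd g) f g) \<cdot> mi (cd f) (cd g)"
    using assms Fm_comp[of "kdiag C X" X ?K] by (simp add: diag)
  finally show ?thesis .
qed

lemma contr_weak_left[simp]: "c X \<cdot> (w X \<otimes> I (bg X)) = I (bg X)"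
proof -
  let ?h = "kpair C zo X (kterm C X) (d X)"
  have "c X \<cdot> (w X \<otimes> I (bg X)) = (c X \<cdot> (F X (kterm C X) \<otimes> I (bg X))) \<cdot> (m0i \<otimes> I (bg X))"
    by (simp add: weak_eq comp_tensor)
  also have "\<dots> = F X ?h \<cdot> (mi zo X \<cdot> (m0i \<otimes> I (bg X)))"
    using contr_tensor_Fm[of "kterm C X" X "d X"] by simp
  also have "\<dots> = F X (F X ?h \<cdot> kpi2 C zo X)"
    unfolding seely_inv_unit_left using Fm_comp[of ?h X "kpi2 C zo X"] by (simp del: Fm_kpi)
  also have "\<dots> = I (bg X)"
    by (simp add: Fm_comp_kpi)
  finally show ?thesis .
qed

lemma contr_weak_right[simp]: "c X \<cdot> (I (bg X) \<otimes> w X) = I (bg X)"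
proof -
  let ?h = "kpair C X zo (d X) (kterm C X)"
  have "c X \<cdot> (I (bg X) \<otimes> w X) = (c X \<cdot> (I (bg X) \<otimes> F X (kterm C X))) \<cdot> (I (bg X) \<otimes> m0i)"
    by (simp add: weak_eq comp_tensor)
  also have "\<dots> = F X ?h \<cdot> (mi X zo \<cdot> (I (bg X) \<otimes> m0i))"
    using contr_tensor_Fm[of "d X" X "kterm C X"] by simp
  also have "\<dots> = F X (F X ?h \<cdot> kpi1 C X zo)"
    unfolding seely_inv_unit_right using Fm_comp[of ?h X "kpi1 C X zo"] by (simp del: Fm_kpi)
  also have "\<dots> = I (bg X)"
    by (simp add: Fm_comp_kpi)
  finally show ?thesis .
qed

lemma contr_tensor_weak_right:
  assumes "f \<in> ar" "dm f = bg X"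
  shows "c X \<cdot> (f \<otimes> w X) = f"
proof -
  have "f \<otimes> w X = (I (bg X) \<otimes> w X) \<cdot> f"
    using assms comp_tensor[of "I (bg X)" f "w X" "I one"] by simp
  then show ?thesis
    using assms by simp
qed

lemma seely_inv_eq_contr: "mi X Y = c (bp X Y) \<cdot> (bm (pr1 X Y) \<otimes> bm (pr2 X Y))"
proof -
  have "kpair C X Y (kpi1 C X Y) (kpi2 C X Y) = d (bp X Y)"
    by (rule biproduct_ext[of _ _ X Y]) (simp_all add: kpi_eq)
  then show ?thesis
    using contr_tensor_Fm[of "kpi1 C X Y" "bp X Y" "kpi2 C X Y"] by simp
qed

subsection \<open>The derivative along the second summand of X \<oplus> A\<close>

lemma dif_in2_bang_proj2_der:
  "(I (bg (bp X A)) \<otimes> in2 X A) \<cdot> df (bp X A) \<cdot> bm (pr2 X A) \<cdot> d A = w (bp X A) \<otimes> I A"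
proof -
  have nat: "df (bp X A) \<cdot> bm (pr2 X A) = (bm (pr2 X A) \<otimes> pr2 X A) \<cdot> df A"
    using dif_natural[of "pr2 X A"] by simp
  have "(I (bg (bp X A)) \<otimes> in2 X A) \<cdot> df (bp X A) \<cdot> bm (pr2 X A) \<cdot> d A
      = ((I (bg (bp X A)) \<otimes> in2 X A) \<cdot> (bm (pr2 X A) \<otimes> pr2 X A)) \<cdot> (df A \<cdot> d A)"
    by (subst comp_prefix_eq[OF nat]) simp_all
  also have "\<dots> = (bm (pr2 X A) \<otimes> I A) \<cdot> (w A \<otimes> I A)"
    by (simp add: comp_tensor dif_der)
  also have "\<dots> = (F (bp X A) (kpi2 C X A) \<cdot> w A) \<otimes> I A"
    by (simp add: comp_tensor)
  also have "\<dots> = w (bp X A) \<otimes> I A"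
    using weak_natural[of "kpi2 C X A" "bp X A"] by (simp del: Fm_kpi)
  finally show ?thesis .
qed

lemma dif_in2_bang_proj1:
  "(I (bg (bp X A)) \<otimes> in2 X A) \<cdot> df (bp X A) \<cdot> bm (pr1 X A) = Z (ten (bg (bp X A)) A) (bg X)"
proof -
  have "df (bp X A) \<cdot> bm (pr1 X A) = (bm (pr1 X A) \<otimes> pr1 X A) \<cdot> df X"
    using dif_natural[of "pr1 X A"] by simp
  then have "(I (bg (bp X A)) \<otimes> in2 X A) \<cdot> df (bp X A) \<cdot> bm (pr1 X A)
      = ((I (bg (bp X A)) \<otimes> in2 X A) \<cdot> (bm (pr1 X A) \<otimes> pr1 X A)) \<cdot> df X"
    by simp
  then show ?thesis
    by (simp add: comp_tensor)
qed

text \<open>The two terms of the Leibniz rule for \<open>df (bp X A) \<cdot> c (bp X A)\<close>, restricted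
  along \<open>in2 X A\<close>: only the one differentiating the right factor survives.\<close>

lemma in2_dif_right_factor:
  "(I (bg (bp X A)) \<otimes> I (bg (bp X A)) \<otimes> in2 X A) \<cdot> (I (bg (bp X A)) \<otimes> df (bp X A)) \<cdot>
     (bm (pr1 X A) \<otimes> (bm (pr2 X A) \<cdot> d A)) = bm (pr1 X A) \<otimes> w (bp X A) \<otimes> I A"
proof -
  let ?B = "I (bg (bp X A))"
  have "(?B \<otimes> ?B \<otimes> in2 X A) \<cdot> (?B \<otimes> df (bp X A)) \<cdot> (bm (pr1 X A) \<otimes> (bm (pr2 X A) \<cdot> d A))
      = (?B \<otimes> ((?B \<otimes> in2 X A) \<cdot> df (bp X A))) \<cdot> (bm (pr1 X A) \<otimes> (bm (pr2 X A) \<cdot> d A))"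
    by (simp add: comp_tensor_prefix)
  also have "\<dots> = bm (pr1 X A) \<otimes> ((?B \<otimes> in2 X A) \<cdot> df (bp X A) \<cdot> bm (pr2 X A) \<cdot> d A)"
    by (simp add: comp_tensor)
  also have "\<dots> = bm (pr1 X A) \<otimes> w (bp X A) \<otimes> I A"
    by (simp only: dif_in2_bang_proj2_der)
  finally show ?thesis .
qed

lemma in2_dif_left_factor:
  "(I (bg (bp X A)) \<otimes> I (bg (bp X A)) \<otimes> in2 X A) \<cdot>
     ((I (bg (bp X A)) \<otimes> sy (bg (bp X A)) (bp X A)) \<cdot> (df (bp X A) \<otimes> I (bg (bp X A)))) \<cdot>
     (bm (pr1 X A) \<otimes> (bm (pr2 X A) \<cdot> d A)) = Z (ten (bg (bp X A)) (ten (bg (bp X A)) A)) (ten (bg X) A)"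
proof -
  define B where "B = bg (bp X A)"
  define R where "R = bm (pr1 X A) \<otimes> (bm (pr2 X A) \<cdot> d A)"
  have swap: "(I B \<otimes> I B \<otimes> in2 X A) \<cdot> (I B \<otimes> sy B (bp X A)) = (I B \<otimes> sy B A) \<cdot> (I B \<otimes> in2 X A \<otimes> I B)"
  proof -
    have "(I B \<otimes> in2 X A) \<cdot> sy B (bp X A) = sy B A \<cdot> (in2 X A \<otimes> I B)"
      using sym_natural[of "I B" "in2 X A"] by simp
    then show ?thesis
      by (simp add: comp_tensor B_def)
  qed
  have inner: "(I B \<otimes> in2 X A \<otimes> I B) \<cdot> (df (bp X A) \<otimes> I B) \<cdot> R
      = ((I B \<otimes> in2 X A) \<cdot> df (bp X A) \<cdot> bm (pr1 X A)) \<otimes> (bm (pr2 X A) \<cdot> d A)"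
  proof -
    have merged: "(I B \<otimes> in2 X A \<otimes> I B) \<cdot> (df (bp X A) \<otimes> I B) = ((I B \<otimes> in2 X A) \<cdot> df (bp X A)) \<otimes> I B"
      using comp_tensor[of "I B \<otimes> in2 X A" "df (bp X A)" "I B" "I B"] by (simp add: B_def)
    have "(I B \<otimes> in2 X A \<otimes> I B) \<cdot> (df (bp X A) \<otimes> I B) \<cdot> R
        = ((I B \<otimes> in2 X A \<otimes> I B) \<cdot> (df (bp X A) \<otimes> I B)) \<cdot> R"
      by (simp add: R_def B_def del: tensor_assoc)
    also have "\<dots> = ((I B \<otimes> in2 X A) \<cdot> df (bp X A) \<cdot> bm (pr1 X A)) \<otimes> (bm (pr2 X A) \<cdot> d A)"
      unfolding merged by (simp add: R_def comp_tensor B_def)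
    finally show ?thesis .
  qed
  have "(I B \<otimes> I B \<otimes> in2 X A) \<cdot> ((I B \<otimes> sy B (bp X A)) \<cdot> (df (bp X A) \<otimes> I B)) \<cdot> R
      = ((I B \<otimes> I B \<otimes> in2 X A) \<cdot> (I B \<otimes> sy B (bp X A))) \<cdot> (df (bp X A) \<otimes> I B) \<cdot> R"
    by (simp add: B_def R_def)
  also have "\<dots> = (I B \<otimes> sy B A) \<cdot> ((I B \<otimes> in2 X A \<otimes> I B) \<cdot> (df (bp X A) \<otimes> I B) \<cdot> R)"
    unfolding swap by (simp add: B_def R_def del: tensor_assoc)
  also have "\<dots> = Z (ten B (ten B A)) (ten (bg X) A)"
    unfolding inner by (simp only: B_def dif_in2_bang_proj1) simp
  finally show ?thesis
    unfolding B_def R_def .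
qed

lemma dif_in2_seely_inv:
  "(I (bg (bp X A)) \<otimes> in2 X A) \<cdot> df (bp X A) \<cdot> mi X A \<cdot> (I (bg X) \<otimes> d A) = bm (pr1 X A) \<otimes> I A"
proof -
  define P where "P = bp X A"
  define B where "B = bg P"
  define R where "R = bm (pr1 X A) \<otimes> (bm (pr2 X A) \<cdot> d A)"
  define lift_in2 where "lift_in2 = I B \<otimes> I B \<otimes> in2 X A"
  define dif_right where "dif_right = I B \<otimes> df P"
  define dif_left where "dif_left = (I B \<otimes> sy B P) \<cdot> (df P \<otimes> I B)"
  have typed: "R \<in> ar" "dm R = ten B B" "cd R = ten (bg X) A"
    "lift_in2 \<in> ar" "dm lift_in2 = ten B (ten B A)" "cd lift_in2 = ten B (ten B P)"
    "dif_right \<in> ar" "dm dif_right = ten B (ten B P)" "cd dif_right = ten B B"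
    "dif_left \<in> ar" "dm dif_left = ten B (ten B P)" "cd dif_left = ten B B"
    by (simp_all add: R_def lift_in2_def dif_right_def dif_left_def B_def P_def)
  have seely_inv: "mi X A \<cdot> (I (bg X) \<otimes> d A) = c P \<cdot> R"
    by (simp add: seely_inv_eq_contr R_def comp_tensor P_def)
  have in2_contr: "(I B \<otimes> in2 X A) \<cdot> (c P \<otimes> I P) = (c P \<otimes> I A) \<cdot> lift_in2"
  proof -
    have "lift_in2 = I (ten B B) \<otimes> in2 X A"
      using tensor_assoc[of "I B" "I B" "in2 X A"] by (simp add: lift_in2_def)
    then show ?thesis
      by (simp add: comp_tensor B_def P_def)
  qed
  have "(I B \<otimes> in2 X A) \<cdot> df P \<cdot> mi X A \<cdot> (I (bg X) \<otimes> d A)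
      = (I B \<otimes> in2 X A) \<cdot> (df P \<cdot> c P) \<cdot> R"
    using typed by (simp add: seely_inv B_def)
  also have "\<dots> = ((I B \<otimes> in2 X A) \<cdot> (c P \<otimes> I P)) \<cdot> (dif_right \<oplus> dif_left) \<cdot> R"
    using dif_contr[of P] typed by (simp add: dif_right_def dif_left_def B_def P_def)
  also have "\<dots> = (c P \<otimes> I A) \<cdot> (lift_in2 \<cdot> (dif_right \<oplus> dif_left) \<cdot> R)"
    unfolding in2_contr using typed by (simp add: B_def P_def)
  also have "lift_in2 \<cdot> (dif_right \<oplus> dif_left) \<cdot> R = lift_in2 \<cdot> dif_right \<cdot> R \<oplus> lift_in2 \<cdot> dif_left \<cdot> R"
    using typed by (simp add: comp_plus plus_comp)
  also have "\<dots> = bm (pr1 X A) \<otimes> w P \<otimes> I A"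
    using in2_dif_right_factor[of X A] in2_dif_left_factor[of X A]
    by (simp add: lift_in2_def dif_right_def dif_left_def R_def B_def P_def)
  also have "(c P \<otimes> I A) \<cdot> (bm (pr1 X A) \<otimes> w P \<otimes> I A) = (c P \<cdot> (bm (pr1 X A) \<otimes> w P)) \<otimes> I A"
    using comp_tensor[of "c P" "bm (pr1 X A) \<otimes> w P" "I A" "I A"] by (simp add: P_def)
  finally show ?thesis
    by (simp add: B_def P_def contr_tensor_weak_right)
qed

lemma lscomp_weak_left:
  assumes "k1 \<in> ar" "dm k1 = bg Q" "k2 \<in> ar" "dm k2 = ten (bg Q) S" "g \<in> ar" "dm g = A" "cd g = S"
  shows "lscomp C (Q, A) (d Q, w Q \<otimes> g) (k1, k2) = (k1, (I (bg Q) \<otimes> g) \<cdot> k2)"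
proof -
  have "(c Q \<otimes> I A) \<cdot> ((I (bg Q) \<otimes> w Q) \<otimes> g) = (c Q \<cdot> (I (bg Q) \<otimes> w Q)) \<otimes> (I A \<cdot> g)"
    using assms by (intro comp_tensor) simp_all
  then have "(c Q \<otimes> I A) \<cdot> (I (bg Q) \<otimes> w Q \<otimes> g) = I (bg Q) \<otimes> g"
    using assms by simp
  then show ?thesis
    using assms by (simp add: lscomp_def kcomp_eq comp_prefix_eq)
qed

lemma lscomp_weak_right:
  assumes "k1 \<in> ar" "dm k1 = bg Q" "cd k1 = Y" "k2 \<in> ar" "dm k2 = ten (bg Q) A"
    "g1 \<in> ar" "dm g1 = Y" "g \<in> ar" "dm g = cd k2"
  shows "lscomp C (Q, A) (k1, k2) (d Y \<cdot> g1, w Y \<otimes> g) = (k1 \<cdot> g1, k2 \<cdot> g)"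
proof -
  have "(F Q k1 \<otimes> k2) \<cdot> (w Y \<otimes> g) = w Q \<otimes> (k2 \<cdot> g)"
    using assms comp_tensor[of "F Q k1" "w Y" k2 g] weak_natural[of k1 Q] by simp
  also have "\<dots> = (w Q \<otimes> I (ten (bg Q) A)) \<cdot> (I one \<otimes> (k2 \<cdot> g))"
    using assms comp_tensor[of "w Q" "I one" "I (ten (bg Q) A)" "k2 \<cdot> g"] by simp
  finally have "((c Q \<otimes> I A) \<cdot> (F Q k1 \<otimes> k2)) \<cdot> (w Y \<otimes> g)
      = ((c Q \<otimes> I A) \<cdot> (w Q \<otimes> I (ten (bg Q) A))) \<cdot> (k2 \<cdot> g)"
    using assms by (simp del: tensor_assoc)
  also have "\<dots> = k2 \<cdot> g"
    using assms comp_tensor[of "c Q" "w Q \<otimes> I (bg Q)" "I A" "I A"] by simp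
  finally show ?thesis
    using assms by (simp add: lscomp_def kcomp_eq)
qed

lemma lscomp_weak_right_id:
  assumes "k1 \<in> ar" "dm k1 = bg Q" "cd k1 = Y" "k2 \<in> ar" "dm k2 = ten (bg Q) A"
    "g \<in> ar" "dm g = cd k2"
  shows "lscomp C (Q, A) (k1, k2) (d Y, w Y \<otimes> g) = (k1, k2 \<cdot> g)"
  using lscomp_weak_right[OF assms(1-5), of "I Y" g] assms by simp

lemma lsid_LShom: "lsid C (Q, A) \<in> LShom C (Q, A) (Q, A)"
  by (simp add: lsid_def kid_def LShom_def hom_iff)

lemma lscomp_lsid_left: "k \<in> LShom C (Q, A) P \<Longrightarrow> lscomp C (Q, A) (lsid C (Q, A)) k = k"
  by (cases k) (simp add: lsid_def kid_def LShom_def hom_iff lscomp_weak_left)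

lemma lsinv_lsid: "lsinv C (Q, A) (Q, A) (lsid C (Q, A)) = lsid C (Q, A)"
  unfolding lsinv_def
proof (rule the_equality)
  fix k assume "k \<in> LShom C (Q, A) (Q, A) \<and> lscomp C (Q, A) (lsid C (Q, A)) k = lsid C (Q, A) \<and>
      lscomp C (Q, A) k (lsid C (Q, A)) = lsid C (Q, A)"
  then show "k = lsid C (Q, A)"
    using lscomp_lsid_left by metis
qed (simp add: lsid_LShom lscomp_lsid_left[OF lsid_LShom])

lemma lsiso_lsid: "lsiso C (Q, A) (Q, A) (lsid C (Q, A))"
  unfolding lsiso_def using lsid_LShom lscomp_lsid_left[OF lsid_LShom] by blast

lemma lscomp_lsproj:
  assumes "(h1, h2) \<in> LShom C (Q, S) (lsprodob C (X, A) (Y, B))"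
  shows "lscomp C (Q, S) (h1, h2) (lsproj1 C (X, A) (Y, B)) = (h1 \<cdot> pr1 X Y, h2 \<cdot> pr1 A B)"
    "lscomp C (Q, S) (h1, h2) (lsproj2 C (X, A) (Y, B)) = (h1 \<cdot> pr2 X Y, h2 \<cdot> pr2 A B)"
  using assms
  by (simp_all add: lsproj1_def lsproj2_def kpi_eq lscomp_weak_right LShom_def lsprodob_def hom_iff)

lemma lspair_eqI:
  assumes h: "h \<in> LShom C (Q, S) (lsprodob C (X, A) (Y, B))"
    and "lscomp C (Q, S) h (lsproj1 C (X, A) (Y, B)) = a"
    and "lscomp C (Q, S) h (lsproj2 C (X, A) (Y, B)) = b"
  shows "lspair C (Q, S) (X, A) (Y, B) a b = h"
  unfolding lspair_def
proof (rule the_equality)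
  fix h' assume h': "h' \<in> LShom C (Q, S) (lsprodob C (X, A) (Y, B)) \<and>
      lscomp C (Q, S) h' (lsproj1 C (X, A) (Y, B)) = a \<and> lscomp C (Q, S) h' (lsproj2 C (X, A) (Y, B)) = b"
  obtain h1 h2 where h12: "h = (h1, h2)" by (cases h)
  obtain h1' h2' where h12': "h' = (h1', h2')" by (cases h')
  have proj: "h1' \<cdot> pr1 X Y = h1 \<cdot> pr1 X Y" "h2' \<cdot> pr1 A B = h2 \<cdot> pr1 A B"
      "h1' \<cdot> pr2 X Y = h1 \<cdot> pr2 X Y" "h2' \<cdot> pr2 A B = h2 \<cdot> pr2 A B"
    using assms h' lscomp_lsproj[of h1 h2] lscomp_lsproj[of h1' h2'] unfolding h12 h12' by auto
  have "h1' = h1" "h2' = h2"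
    using h h' proj unfolding h12 h12'
    by (auto simp: LShom_def lsprodob_def hom_iff intro: biproduct_ext)
  then show "h' = h"
    by (simp add: h12 h12')
qed (use assms in blast)

subsection \<open>The tangent functor\<close>

definition T_ob :: "'o \<Rightarrow> 'o \<times> 'o" where
  "T_ob X = (X, X)"

definition T_ar :: "'o \<Rightarrow> 'o \<Rightarrow> 'a \<Rightarrow> 'a \<times> 'a" where
  "T_ar X Y f = (f, df X \<cdot> f)"

lemma chain_rule:
  assumes "f \<in> hom C (bg X) Y"
  shows "df X \<cdot> F X f = (c X \<otimes> I X) \<cdot> (F X f \<otimes> (df X \<cdot> f)) \<cdot> df Y"
proof -
  have f: "f \<in> ar" "dm f = bg X" "cd f = Y"
    using assms by (simp_all add: hom_iff)
  have "df X \<cdot> F X f = ((c X \<otimes> I X) \<cdot> (p X \<otimes> df X)) \<cdot> df (bg X) \<cdot> bm f"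
    using f by (simp add: Fm_eq comp_prefix_eq[OF dif_prm])
  also have "\<dots> = (c X \<otimes> I X) \<cdot> ((p X \<otimes> df X) \<cdot> (bm f \<otimes> f)) \<cdot> df Y"
    using f dif_natural[of f] by simp
  also have "\<dots> = (c X \<otimes> I X) \<cdot> (F X f \<otimes> (df X \<cdot> f)) \<cdot> df Y"
    using f by (simp add: comp_tensor Fm_eq)
  finally show ?thesis .
qed

lemma is_T_functor_T: "is_T_functor C T_ob T_ar"
  unfolding is_T_functor_def
proof (intro conjI allI impI)
  fix X Y f assume "f \<in> hom C (bg X) Y"
  then show "T_ar X Y f \<in> LShom C (T_ob X) (T_ob Y)"
    by (simp add: T_ar_def T_ob_def LShom_def hom_iff)
next
  fix X
  show "T_ar X X (kid C X) = lsid C (T_ob X)"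
    by (simp add: T_ar_def T_ob_def lsid_def kid_def dif_der)
next
  fix X Y Z f g assume f: "f \<in> hom C (bg X) Y" and g: "g \<in> hom C (bg Y) Z"
  have "df X \<cdot> F X f \<cdot> g = ((c X \<otimes> I X) \<cdot> (F X f \<otimes> (df X \<cdot> f))) \<cdot> df Y \<cdot> g"
    using f g by (simp add: hom_iff comp_prefix_eq[OF chain_rule[OF f]])
  then show "T_ar X Z (kcomp C X f g) = lscomp C (T_ob X) (T_ar X Y f) (T_ar Y Z g)"
    using f by (simp add: T_ar_def T_ob_def lscomp_def kcomp_eq hom_iff)
qed

lemma phi_T: "phi C T_ob T_ar X Y = lsid C (bp X Y, bp X Y)"
proof -
  have proj: "lsproj1 C (X, X) (Y, Y) \<in> LShom C (bp X Y, bp X Y) (X, X)"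
    "lsproj2 C (X, X) (Y, Y) \<in> LShom C (bp X Y, bp X Y) (Y, Y)"
    by (simp_all add: lsproj1_def lsproj2_def LShom_def hom_iff)
  have "T_ar (bp X Y) X (kpi1 C X Y) = lsproj1 C (X, X) (Y, Y)"
    "T_ar (bp X Y) Y (kpi2 C X Y) = lsproj2 C (X, X) (Y, Y)"
    using comp_tensor[of "w (bp X Y)" "I one" "I (bp X Y)" "pr1 X Y"]
      comp_tensor[of "w (bp X Y)" "I one" "I (bp X Y)" "pr2 X Y"]
    by (simp_all add: T_ar_def lsproj1_def lsproj2_def kpi_eq comp_prefix_eq[OF dif_der])
  then have "phi C T_ob T_ar X Y =
      lspair C (bp X Y, bp X Y) (X, X) (Y, Y) (lsproj1 C (X, X) (Y, Y)) (lsproj2 C (X, X) (Y, Y))"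
    by (simp add: phi_def T_ob_def)
  also have "\<dots> = lsid C (bp X Y, bp X Y)"
    using proj by (intro lspair_eqI) (simp_all add: lsprodob_def lsid_LShom lscomp_lsid_left)
  finally show ?thesis .
qed

lemma axiom_t1_T: "axiom_t1 C T_ob T_ar"
  unfolding axiom_t1_def by (simp add: T_ob_def T_ar_def phi_T lsiso_lsid)

lemma axiom_t2_T: "axiom_t2 C T_ob"
  by (simp add: axiom_t2_def T_ob_def)

lemma i2_T: "i2 C T_ob T_ar X Y = (d (bp X Y), w (bp X Y) \<otimes> in2 X Y)"
proof -
  have "i2 C T_ob T_ar X Y =
      lscomp C (bp X Y, Y) (d (bp X Y), w (bp X Y) \<otimes> in2 X Y) (lsid C (bp X Y, bp X Y))"
    by (simp add: i2_def phi_T T_ob_def kid_def lsinv_lsid)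
  also have "\<dots> = (d (bp X Y), (w (bp X Y) \<otimes> in2 X Y) \<cdot> I (bp X Y))"
    unfolding lsid_def kid_def fst_conv snd_conv by (rule lscomp_weak_right_id) simp_all
  finally show ?thesis
    by simp
qed

lemma nlax_eq: "nlax C X A = mi X A \<cdot> (d X \<otimes> d A)"
  by (simp add: nlax_def eta_def Um_def kcomp_eq)

lemma bracket_eq:
  assumes "f \<in> ar" "dm f = bg X" "cd f = Y" "u \<in> ar" "dm u = ten (bg X) A" "cd u = B"
  shows "bracket C X A Y B f u = kpair C Y B (bm (pr1 X A) \<cdot> f) ((mi X A \<cdot> (I (bg X) \<otimes> d A)) \<cdot> u)"
proof -
  let ?K = "kprod C X A (bg X) A (I (bg X)) (d A)"
  have natural: "mi X A \<cdot> (p X \<otimes> I (bg A)) = F (bp X A) ?K \<cdot> mi (bg X) A"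
    using seely_inv_natural[of "I (bg X)" "d A" X A] by simp
  have "F (bp X A) ?K \<cdot> mi (bg X) A \<cdot> (d (bg X) \<otimes> d A) = (F (bp X A) ?K \<cdot> mi (bg X) A) \<cdot> (d (bg X) \<otimes> d A)"
    by simp
  also have "\<dots> = mi X A \<cdot> ((p X \<otimes> I (bg A)) \<cdot> (d (bg X) \<otimes> d A))"
    unfolding natural[symmetric] by simp
  also have "\<dots> = mi X A \<cdot> (I (bg X) \<otimes> d A)"
    by (simp add: comp_tensor)
  finally have "F (bp X A) ?K \<cdot> mi (bg X) A \<cdot> (d (bg X) \<otimes> d A) = mi X A \<cdot> (I (bg X) \<otimes> d A)" .
  then show ?thesis
    using assms by (simp add: bracket_def kcomp_eq nlax_eq Um_def eta_def kid_def)
qed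

lemma axiom_t3_T: "axiom_t3 C T_ob T_ar"
  unfolding axiom_t3_def
proof (intro allI impI)
  fix X A Y B f u assume "(f, u) \<in> LShom C (X, A) (Y, B)"
  then have typed: "f \<in> ar" "dm f = bg X" "cd f = Y" "u \<in> ar" "dm u = ten (bg X) A" "cd u = B"
    by (auto simp: LShom_def hom_iff)
  let ?g = "mi X A \<cdot> (I (bg X) \<otimes> d A)"
  let ?br = "kpair C Y B (bm (pr1 X A) \<cdot> f) (?g \<cdot> u)"
  let ?H = "(I (bg (bp X A)) \<otimes> in2 X A) \<cdot> df (bp X A)"
  have br: "bracket C X A Y B f u = ?br"
    using typed by (rule bracket_eq)
  have "?H \<cdot> ?br = (?H \<cdot> bm (pr1 X A)) \<cdot> f \<cdot> in1 Y B \<oplus> (?H \<cdot> ?g) \<cdot> u \<cdot> in2 Y B"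
    using typed by (simp add: kpair_eq comp_plus)
  also have "\<dots> = ((bm (pr1 X A) \<otimes> I A) \<cdot> u) \<cdot> in2 Y B"
    using typed dif_in2_seely_inv[of X A] dif_in2_bang_proj1[of X A] by simp
  finally have "?H \<cdot> ?br = ((bm (pr1 X A) \<otimes> I A) \<cdot> u) \<cdot> in2 Y B" .
  then show "lscomp C (bp X A, A) (Wm C X A Y B f u) (i2 C T_ob T_ar Y B) =
      lscomp C (bp X A, snd (T_ob A)) (i2 C T_ob T_ar X A) (T_ar (bp X A) (bp Y B) (bracket C X A Y B f u))"
    using typed by (simp add: Wm_def br i2_T T_ar_def T_ob_def lscomp_weak_right_id lscomp_weak_left)
qed

end

theorem theorem4p7:
  fixes C :: "('o, 'a) dsc_data"
  assumes "differential_seely_category C"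
  shows "coKleisli_is_GDSC C"
proof -
  interpret diff_seely C
    by unfold_locales (rule assms)
  show ?thesis
    unfolding coKleisli_is_GDSC_def using is_T_functor_T axiom_t1_T axiom_t2_T axiom_t3_T by blast
qed

end
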